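(* Let $(X_t,\mathcal{F}_t,\mathbf{P}_x)$ be a one-dimensional diffusion on the canonical space as in the context whose part on $S$ is a recurrent strong Markov process, and let $A=(a_{i,j})_{1\le i,j\le s}$ be the transition matrix of the Markov chain $(X_{\tau_n},\mathcal{F}_{\tau_n})$ on $\mathtt{D}=\{d_1<\dots<d_s\}$, i.e. $a_{i,j}$ is the probability of moving from $d_i$ to $d_j$. Then $P_{odd}(A^{2n})$ and $P_{even}(A^{2n})$ converge as $n\to\infty$ to stochastic matrices $A_1$ and $A_2$, and there are a $1\times[\frac{s+1}{2}]$ matrix $C_1$ and a $1\times[\frac{s}{2}]$ matrix $C_2$, all of whose components are positive, such that $A_1=(1,\dots,1)'C_1$ and $A_2=(1,\dots,1)'C_2$.
   Context: $S$ is one of $\mathbb{R}$, $[0,\infty)$, $(0,\infty)$; $\Omega=C([0,\infty);S)$, $X_t$ the coordinate process. $\mathtt{D}=\{d_1<\dots<d_s\}\subset S$ finite with $s\ge2$; $\tau_1=\inf\{t\ge0:X_t\in\mathtt{D}\}$, $\tau_{n+1}=\inf\{t\ge\tau_n:X_t\in\mathtt{D}\setminus\{X_{\tau_n}\}\}$. For an $s\times s$ matrix $M=(m_{i,j})$, $P_{odd}(M)$ is the $[\frac{s+1}{2}]\times[\frac{s+1}{2}]$ matrix with entries $(P_{odd}(M))_{i,j}=m_{2i-1,2j-1}$ and $P_{even}(M)$ is the $[\frac{s}{2}]\times[\frac{s}{2}]$ matrix with entries $(P_{even}(M))_{i,j}=m_{2i,2j}$; $[\cdot]$ is the integer part and $'$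 denotes transpose. *)

theory Defs
  imports "HOL-Probability.Probability" "Jordan_Normal_Form.Matrix"
begin

text \<open>Paths are functions real => real; only their values on [0,oo) matter.\<close>

definition paths :: "real set \<Rightarrow> (real \<Rightarrow> real) set" where
  "paths S = {\<omega>. continuous_on {0..} \<omega> \<and> (\<forall>t\<ge>0. \<omega> t \<in> S)}"

definition path_space :: "real set \<Rightarrow> (real \<Rightarrow> real) measure" where
  "path_space S = sigma (paths S)
     {{\<omega> \<in> paths S. \<omega> u \<in> B} | u B. 0 \<le> u \<and> B \<in> sets borel}"

definition nat_filtration :: "real set \<Rightarrow> real \<Rightarrow> (real \<Rightarrow> real) measure" where
  "nat_filtration S t = sigma (paths S)
     {{\<omega> \<in> paths S. \<omega> u \<in> B} | u B. 0 \<le> u \<and> u \<le> t \<and> B \<in> sets borel}"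

definition is_stopping_time :: "real set \<Rightarrow> ((real \<Rightarrow> real) \<Rightarrow> ereal) \<Rightarrow> bool" where
  "is_stopping_time S T \<longleftrightarrow> (\<forall>\<omega>\<in>paths S. 0 \<le> T \<omega>) \<and>
     (\<forall>t\<ge>0. {\<omega> \<in> paths S. T \<omega> \<le> ereal t} \<in> sets (nat_filtration S t))"

definition stopped_sets :: "real set \<Rightarrow> ((real \<Rightarrow> real) \<Rightarrow> ereal) \<Rightarrow> (real \<Rightarrow> real) set set" where
  "stopped_sets S T = {A \<in> sets (path_space S).
     \<forall>t\<ge>0. A \<inter> {\<omega> \<in> paths S. T \<omega> \<le> ereal t} \<in> sets (nat_filtration S t)}"

definition shift :: "(real \<Rightarrow> real) \<Rightarrow> real \<Rightarrow> (real \<Rightarrow> real)" where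
  "shift \<omega> t = (\<lambda>u. \<omega> (t + u))"

text \<open>X_T (only meaningful on {T < oo})\<close>
definition stopped_value :: "((real \<Rightarrow> real) \<Rightarrow> ereal) \<Rightarrow> (real \<Rightarrow> real) \<Rightarrow> real" where
  "stopped_value T \<omega> = \<omega> (real_of_ereal (T \<omega>))"

definition diffusion :: "real set \<Rightarrow> (real \<Rightarrow> (real \<Rightarrow> real) measure) \<Rightarrow> bool" where
  "diffusion S P \<longleftrightarrow>
     (\<forall>x\<in>S. prob_space (P x) \<and> sets (P x) = sets (path_space S)) \<and>
     (\<forall>x\<in>S. AE \<omega> in P x. \<omega> 0 = x) \<and>
     (\<forall>B\<in>sets (path_space S). (\<lambda>x. measure (P x) B) \<in> borel_measurable (restrict_space borel S)) \<and>
     (\<forall>T x A B. is_stopping_time S T \<longrightarrow> x \<in> S \<longrightarrow> A \<in> stopped_sets S T \<longrightarrow>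
        B \<in> sets (path_space S) \<longrightarrow>
        emeasure (P x) {\<omega> \<in> A. T \<omega> < \<infinity> \<and> shift \<omega> (real_of_ereal (T \<omega>)) \<in> B}
        = (\<integral>\<^sup>+ \<omega>. indicator {\<omega> \<in> A. T \<omega> < \<infinity>} \<omega> * emeasure (P (stopped_value T \<omega>)) B \<partial>P x))"

definition recurrent :: "real set \<Rightarrow> (real \<Rightarrow> (real \<Rightarrow> real) measure) \<Rightarrow> bool" where
  "recurrent S P \<longleftrightarrow> (\<forall>x\<in>S. \<forall>y\<in>S. AE \<omega> in P x. \<exists>t\<ge>0. \<omega> t = y)"

section \<open>Successive hitting times of D (1-based: tau D 1 = tau_1; tau D 0 is unused)\<close>

fun tau :: "real set \<Rightarrow> nat \<Rightarrow> (real \<Rightarrow> real) \<Rightarrow> ereal" where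
  "tau D 0 \<omega> = 0"
| "tau D (Suc 0) \<omega> = Inf {ereal t | t. 0 \<le> t \<and> \<omega> t \<in> D}"
| "tau D (Suc (Suc n)) \<omega> =
     Inf {ereal t | t. tau D (Suc n) \<omega> \<le> ereal t \<and> \<omega> t \<in> D - {stopped_value (tau D (Suc n)) \<omega>}}"

text \<open>Transition probability of the embedded chain from d_i to d_j:
  a_{i,j} = P_{d_i}(X_{tau_2} = d_j) (under P_{d_i}, tau_1 = 0).\<close>
definition trans_prob :: "(real \<Rightarrow> (real \<Rightarrow> real) measure) \<Rightarrow> real set \<Rightarrow> real \<Rightarrow> real \<Rightarrow> real" where
  "trans_prob P D x y = measure (P x) {\<omega> \<in> space (P x). tau D 2 \<omega> < \<infinity> \<and> stopped_value (tau D 2) \<omega> = y}"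

section \<open>Matrices (Jordan_Normal_Form, 0-based indices)\<close>

text \<open>P_odd(M)_{i,j} = m_{2i-1,2j-1} and P_even(M)_{i,j} = m_{2i,2j} in 1-based indexing\<close>
definition P_odd :: "'a mat \<Rightarrow> 'a mat" where
  "P_odd M = mat ((dim_row M + 1) div 2) ((dim_row M + 1) div 2) (\<lambda>(i,j). M $$ (2*i, 2*j))"

definition P_even :: "'a mat \<Rightarrow> 'a mat" where
  "P_even M = mat (dim_row M div 2) (dim_row M div 2) (\<lambda>(i,j). M $$ (2*i+1, 2*j+1))"

definition stochastic_mat :: "real mat \<Rightarrow> bool" where
  "stochastic_mat M \<longleftrightarrow> dim_row M = dim_col M \<and>
     (\<forall>i<dim_row M. \<forall>j<dim_col M. 0 \<le> M $$ (i,j)) \<and>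
     (\<forall>i<dim_row M. (\<Sum>j<dim_col M. M $$ (i,j)) = 1)"

definition mat_tendsto :: "(nat \<Rightarrow> real mat) \<Rightarrow> real mat \<Rightarrow> bool" where
  "mat_tendsto Ms L \<longleftrightarrow> (\<forall>n. dim_row (Ms n) = dim_row L \<and> dim_col (Ms n) = dim_col L) \<and>
     (\<forall>i<dim_row L. \<forall>j<dim_col L. (\<lambda>n. Ms n $$ (i,j)) \<longlonglongrightarrow> L $$ (i,j))"

end

theory Submission
  imports Defs
begin

text \<open>By continuity a path started at \<open>d\<^sub>i\<close> cannot reach a point of \<open>D\<close> beyond a neighbour of
  \<open>d\<^sub>i\<close> without crossing that neighbour first, so the embedded chain only moves between neighbours.
  Each such move has positive probability: from a point \<open>y\<close> strictly between \<open>x\<close> and \<open>z\<close> the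
  path hits \<open>x\<close> before \<open>z\<close> with positive probability, by a renewal argument based on the strong
  Markov property at the hitting time of \<open>z\<close> together with recurrence.
  Hence \<open>A\<^sup>2\<close> preserves the parity of the index, and on each parity class it is a stochastic
  matrix with positive diagonal and positive nearest-neighbour entries, so one of its powers is
  strictly positive. Doeblin's contraction argument then makes its powers converge to a matrix
  whose rows all equal one positive probability vector.\<close>

section \<open>Paths and first entrances\<close>

definition first_entry :: "real set \<Rightarrow> real \<Rightarrow> (real \<Rightarrow> real) \<Rightarrow> bool" where
  "first_entry F a \<omega> \<longleftrightarrow> a \<in> F \<and> (\<exists>\<tau>\<ge>0. \<omega> \<tau> = a \<and> (\<forall>u\<in>{0..<\<tau>}. \<omega> u \<notin> F))"

definition hitting_time :: "real set \<Rightarrow> (real \<Rightarrow> real) \<Rightarrow> ereal" where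
  "hitting_time F \<omega> = Inf {ereal t | t. 0 \<le> t \<and> \<omega> t \<in> F}"

definition visits :: "real set \<Rightarrow> real \<Rightarrow> real set \<Rightarrow> (real \<Rightarrow> real) set" where
  "visits S c I = {\<omega> \<in> paths S. \<exists>v\<in>I. \<omega> v = c}"

definition first_entry_event :: "real set \<Rightarrow> real set \<Rightarrow> real \<Rightarrow> (real \<Rightarrow> real) set" where
  "first_entry_event S F a = {\<omega> \<in> paths S. first_entry F a \<omega>}"

lemma paths_continuous: "\<omega> \<in> paths S \<Longrightarrow> continuous_on {0..} \<omega>"
  by (simp add: paths_def)

lemma first_entryI: "a \<in> F \<Longrightarrow> 0 \<le> \<tau> \<Longrightarrow> \<omega> \<tau> = a \<Longrightarrow> (\<And>u. 0 \<le> u \<Longrightarrow> u < \<tau> \<Longrightarrow> \<omega> u \<notin> F) \<Longrightarrow>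
    first_entry F a \<omega>"
  unfolding first_entry_def by auto

lemma first_entryE:
  assumes "first_entry F a \<omega>"
  obtains \<tau> where "a \<in> F" "0 \<le> \<tau>" "\<omega> \<tau> = a" "\<And>u. 0 \<le> u \<Longrightarrow> u < \<tau> \<Longrightarrow> \<omega> u \<notin> F"
  using assms unfolding first_entry_def by auto

lemma first_entry_in: "first_entry F a \<omega> \<Longrightarrow> a \<in> F"
  by (simp add: first_entry_def)

lemma first_entry_unique: "first_entry F a \<omega> \<Longrightarrow> first_entry F b \<omega> \<Longrightarrow> a = b"
  by (elim first_entryE) (metis linorder_neqE_linordered_idom)

lemma first_entry_at_start: "\<omega> 0 = x \<Longrightarrow> x \<in> F \<Longrightarrow> first_entry F a \<omega> \<longleftrightarrow> a = x"
  by (metis first_entryI first_entry_unique order_refl not_less)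

lemma first_passage_time:
  assumes "\<omega> \<in> paths S" "closed F" "0 \<le> t0" "\<omega> t0 \<in> F"
  obtains \<tau> where "0 \<le> \<tau>" "\<tau> \<le> t0" "\<omega> \<tau> \<in> F" "\<And>u. 0 \<le> u \<Longrightarrow> u < \<tau> \<Longrightarrow> \<omega> u \<notin> F"
proof -
  define Z where "Z = {0..} \<inter> \<omega> -` F"
  have "closed Z"
    unfolding Z_def by (rule continuous_closed_preimage[OF paths_continuous[OF assms(1)] _ assms(2)]) simp
  moreover have "Z \<noteq> {}" "bdd_below Z"
    using assms unfolding Z_def by (auto intro: bdd_belowI[of _ 0])
  ultimately have "Inf Z \<in> Z" by (rule closed_contains_Inf[rotated 2])
  moreover have "Inf Z \<le> u" if "u \<in> Z" for u
    using cInf_lower[OF that \<open>bdd_below Z\<close>] .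
  ultimately show ?thesis
    using assms by (intro that[of "Inf Z"]) (auto simp: Z_def not_le[symmetric])
qed

lemma hitting_time_eq:
  assumes "0 \<le> \<tau>" "\<omega> \<tau> \<in> F" "\<And>u. 0 \<le> u \<Longrightarrow> u < \<tau> \<Longrightarrow> \<omega> u \<notin> F"
  shows "hitting_time F \<omega> = ereal \<tau>"
  unfolding hitting_time_def
proof (rule antisym)
  show "Inf {ereal t |t. 0 \<le> t \<and> \<omega> t \<in> F} \<le> ereal \<tau>"
    using assms by (intro Inf_lower) auto
  show "ereal \<tau> \<le> Inf {ereal t |t. 0 \<le> t \<and> \<omega> t \<in> F}"
  proof (rule Inf_greatest)
    fix x assume "x \<in> {ereal t |t. 0 \<le> t \<and> \<omega> t \<in> F}"
    then obtain t where "x = ereal t" "0 \<le> t" "\<omega> t \<in> F" by auto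
    then show "ereal \<tau> \<le> x" using assms(3)[of t] by force
  qed
qed

lemma hitting_time_eq_infinity:
  assumes "\<And>t. 0 \<le> t \<Longrightarrow> \<omega> t \<notin> F"
  shows "hitting_time F \<omega> = \<infinity>"
proof -
  have no_hit: "{ereal t | t. 0 \<le> t \<and> \<omega> t \<in> F} = {}" using assms by auto
  show ?thesis unfolding hitting_time_def no_hit by (simp add: top_ereal_def)
qed

lemma hitting_time_nonneg: "0 \<le> hitting_time F \<omega>"
  unfolding hitting_time_def by (rule Inf_greatest) auto

lemma hitting_time_le: "0 \<le> t \<Longrightarrow> \<omega> t \<in> F \<Longrightarrow> hitting_time F \<omega> \<le> ereal t"
  unfolding hitting_time_def by (rule Inf_lower) auto

lemma hitting_time_finiteE:
  assumes "\<omega> \<in> paths S" "closed F" "hitting_time F \<omega> < \<infinity>"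
  obtains \<tau> where "hitting_time F \<omega> = ereal \<tau>" "0 \<le> \<tau>" "\<omega> \<tau> \<in> F"
    "\<And>u. 0 \<le> u \<Longrightarrow> u < \<tau> \<Longrightarrow> \<omega> u \<notin> F"
proof -
  have "\<exists>t\<ge>0. \<omega> t \<in> F"
    using hitting_time_eq_infinity[of \<omega> F] assms(3) by auto
  then obtain t0 where "0 \<le> t0" "\<omega> t0 \<in> F" by blast
  then obtain \<tau> where "0 \<le> \<tau>" "\<omega> \<tau> \<in> F" "\<And>u. 0 \<le> u \<Longrightarrow> u < \<tau> \<Longrightarrow> \<omega> u \<notin> F"
    using first_passage_time[OF assms(1,2)] by metis
  then show ?thesis using that hitting_time_eq by blast
qed

lemma first_entry_iff_hitting_time:
  assumes "\<omega> \<in> paths S" "closed F"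
  shows "first_entry F y \<omega> \<longleftrightarrow> hitting_time F \<omega> < \<infinity> \<and> \<omega> (real_of_ereal (hitting_time F \<omega>)) = y"
proof
  assume "first_entry F y \<omega>"
  then show "hitting_time F \<omega> < \<infinity> \<and> \<omega> (real_of_ereal (hitting_time F \<omega>)) = y"
    by (elim first_entryE) (simp add: hitting_time_eq)
next
  assume "hitting_time F \<omega> < \<infinity> \<and> \<omega> (real_of_ereal (hitting_time F \<omega>)) = y"
  then show "first_entry F y \<omega>"
    using hitting_time_finiteE[OF assms] by (metis first_entryI real_of_ereal.simps(1))
qed

lemma tau_2_after_first_entry:
  assumes "first_entry D a \<omega>"
  shows "tau D 2 \<omega> = hitting_time (D - {a}) \<omega>"
proof -
  obtain \<tau> where \<tau>: "a \<in> D" "0 \<le> \<tau>" "\<omega> \<tau> = a" "\<And>u. 0 \<le> u \<Longrightarrow> u < \<tau> \<Longrightarrow> \<omega> u \<notin> D"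
    using assms by (elim first_entryE) blast
  have tau_1: "tau D 1 \<omega> = ereal \<tau>"
    using hitting_time_eq[of \<tau> \<omega> D] \<tau> by (simp add: hitting_time_def)
  have "ereal \<tau> \<le> ereal t \<and> \<omega> t \<in> D - {a} \<longleftrightarrow> 0 \<le> t \<and> \<omega> t \<in> D - {a}" for t
    using \<tau> by (auto simp: not_less[symmetric])
  then show ?thesis
    by (simp add: numeral_2_eq_2 tau_1[simplified] stopped_value_def \<tau>(3) hitting_time_def)
qed

lemma tau_2_iff_first_entries:
  assumes "\<omega> \<in> paths S" "finite D"
  shows "tau D 2 \<omega> < \<infinity> \<and> stopped_value (tau D 2) \<omega> = y \<longleftrightarrow>
         (\<exists>a. first_entry D a \<omega> \<and> first_entry (D - {a}) y \<omega>)"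
proof (cases "\<exists>t\<ge>0. \<omega> t \<in> D")
  case True
  then obtain \<tau> where \<tau>: "0 \<le> \<tau>" "\<omega> \<tau> \<in> D" "\<And>u. 0 \<le> u \<Longrightarrow> u < \<tau> \<Longrightarrow> \<omega> u \<notin> D"
    using first_passage_time[OF assms(1) finite_imp_closed[OF assms(2)]] by metis
  then have a: "first_entry D (\<omega> \<tau>) \<omega>" by (intro first_entryI) auto
  have "closed (D - {\<omega> \<tau>})" using assms(2) by (intro finite_imp_closed) auto
  then show ?thesis
    unfolding stopped_value_def tau_2_after_first_entry[OF a]
    using first_entry_iff_hitting_time[OF assms(1)] a first_entry_unique by metis
next
  case False
  then have "tau D 1 \<omega> = \<infinity>"
    using hitting_time_eq_infinity[of \<omega> D] by (simp add: hitting_time_def)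
  then have "tau D 2 \<omega> = \<infinity>" by (simp add: numeral_2_eq_2 top_ereal_def)
  moreover have "\<not> first_entry D a \<omega>" for a using False by (auto elim: first_entryE)
  ultimately show ?thesis by simp
qed

lemma shift_in_paths: "\<omega> \<in> paths S \<Longrightarrow> 0 \<le> \<tau> \<Longrightarrow> shift \<omega> \<tau> \<in> paths S"
  unfolding paths_def shift_def
  by (auto intro!: continuous_on_compose2[of "{0..}" \<omega>] continuous_intros)

lemma path_crosses:
  assumes "\<omega> \<in> paths S" "0 \<le> \<tau>" "c \<in> {min (\<omega> 0) (\<omega> \<tau>)<..<max (\<omega> 0) (\<omega> \<tau>)}"
  obtains u where "0 \<le> u" "u < \<tau>" "\<omega> u = c"
proof -
  have cont: "continuous_on {0..\<tau>} \<omega>"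
    using paths_continuous[OF assms(1)] by (rule continuous_on_subset) auto
  obtain u where "0 \<le> u" "u \<le> \<tau>" "\<omega> u = c"
    using assms(3) IVT'[of \<omega> 0 c \<tau>, OF _ _ assms(2) cont] IVT2'[of \<omega> \<tau> c 0, OF _ _ assms(2) cont]
    by (force simp: min_def max_def split: if_splits)
  moreover have "u \<noteq> \<tau>" using assms(3) calculation by auto
  ultimately show ?thesis using that by simp
qed

lemma first_entry_from_gap:
  assumes p: "\<omega> \<in> paths S" and btw: "\<omega> 0 \<in> {min y z<..<max y z}"
    and gap: "D \<inter> {min y z<..<max y z} \<subseteq> {\<omega> 0}" and "y \<in> D"
    and first: "first_entry {y, z} y \<omega>"
  shows "first_entry (D - {\<omega> 0}) y \<omega>"
proof -
  obtain \<tau> where \<tau>: "0 \<le> \<tau>" "\<omega> \<tau> = y" "\<And>u. 0 \<le> u \<Longrightarrow> u < \<tau> \<Longrightarrow> \<omega> u \<notin> {y, z}"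
    using first by (auto elim: first_entryE)
  have "\<omega> u \<notin> D - {\<omega> 0}" if u: "0 \<le> u" "u < \<tau>" for u
  proof
    assume w: "\<omega> u \<in> D - {\<omega> 0}"
    have "\<omega> u \<noteq> y" "\<omega> u \<noteq> z" using \<tau>(3) u by auto
    moreover have "\<omega> u \<notin> {min y z<..<max y z}" using gap w by auto
    ultimately have "\<omega> u < min y z \<or> max y z < \<omega> u" by (auto simp: min_def max_def)
    then obtain c where c: "c \<in> {y, z}" "c \<in> {min (\<omega> 0) (\<omega> u)<..<max (\<omega> 0) (\<omega> u)}"
    proof
      assume "\<omega> u < min y z"
      then show thesis using that[of "min y z"] btw by (auto simp: min_def max_def)
    next
      assume "max y z < \<omega> u"
      then show thesis using that[of "max y z"] btw by (auto simp: min_def max_def)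
    qed
    then obtain u' where "0 \<le> u'" "u' < u" "\<omega> u' = c" using path_crosses[OF p u(1)] by blast
    then show False using \<tau>(3)[of u'] u c(1) by auto
  qed
  moreover have "y \<in> D - {\<omega> 0}" using \<open>y \<in> D\<close> btw by auto
  ultimately show ?thesis using \<tau> by (auto intro: first_entryI)
qed

section \<open>Measurability of hitting events\<close>

lemma space_path_space: "space (path_space S) = paths S"
  unfolding path_space_def by (simp add: space_measure_of_conv)

lemma sets_path_space:
  "sets (path_space S) = sigma_sets (paths S) {{\<omega> \<in> paths S. \<omega> u \<in> B} | u B. 0 \<le> u \<and> B \<in> sets borel}"
  unfolding path_space_def by (rule sets_measure_of) auto

lemma paths_in_path_space: "paths S \<in> sets (path_space S)"
  using sets.top[of "path_space S"] by (simp add: space_path_space)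

lemma sets_nat_filtration:
  "sets (nat_filtration S t) =
     sigma_sets (paths S) {{\<omega> \<in> paths S. \<omega> u \<in> B} | u B. 0 \<le> u \<and> u \<le> t \<and> B \<in> sets borel}"
  unfolding nat_filtration_def by (rule sets_measure_of) auto

lemma nat_filtration_subset: "sets (nat_filtration S t) \<subseteq> sets (path_space S)"
  unfolding sets_nat_filtration sets_path_space by (rule sigma_sets_mono') auto

lemma nat_filtration_mono: "t \<le> t' \<Longrightarrow> sets (nat_filtration S t) \<subseteq> sets (nat_filtration S t')"
  unfolding sets_nat_filtration by (rule sigma_sets_mono') fastforce

lemma coordinate_set_nat_filtration:
  assumes "0 \<le> u" "u \<le> t" "B \<in> sets borel"
  shows "{\<omega> \<in> paths S. \<omega> u \<in> B} \<in> sets (nat_filtration S t)"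
  unfolding sets_nat_filtration using assms by (blast intro: sigma_sets.Basic)

lemma visits_Icc_eq_countable:
  assumes r: "0 \<le> r" and rt: "r \<le> t"
  shows "visits S c {r..t} =
    (\<Inter>k. \<Union>q\<in>insert t (\<rat> \<inter> {r..t}). {\<omega> \<in> paths S. \<omega> q \<in> ball c (1 / real (Suc k))})"
    (is "_ = (\<Inter>k. \<Union>q\<in>?Q. ?B k q)")
proof (intro equalityI subsetI)
  fix \<omega> assume "\<omega> \<in> visits S c {r..t}"
  then obtain v where v: "\<omega> \<in> paths S" "r \<le> v" "v \<le> t" "\<omega> v = c" unfolding visits_def by auto
  have cont: "continuous_on {r..t} \<omega>"
    using r by (intro continuous_on_subset[OF paths_continuous[OF v(1)]]) auto
  show "\<omega> \<in> (\<Inter>k. \<Union>q\<in>?Q. ?B k q)"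
  proof (rule INT_I)
    fix k :: nat
    have "0 < 1 / real (Suc k)" by simp
    then obtain d where d: "0 < d" "\<forall>x'\<in>{r..t}. dist x' v < d \<longrightarrow> dist (\<omega> x') (\<omega> v) < 1 / real (Suc k)"
      using cont v unfolding continuous_on_iff by (metis atLeastAtMost_iff)
    obtain q where q: "q \<in> ?Q" "dist q v < d"
    proof (cases "v = t")
      case False
      then have "v < min (v + d) t" using v d by auto
      then obtain q where "q \<in> \<rat>" "v < q" "q < min (v + d) t" using Rats_dense_in_real by blast
      then show ?thesis using that[of q] v by (auto simp: dist_real_def)
    qed (use that[of t] d in auto)
    then have "dist (\<omega> q) c < 1 / real (Suc k)" using d(2) v rt by auto
    then show "\<omega> \<in> (\<Union>q\<in>?Q. ?B k q)" using q v by (auto simp: dist_commute)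
  qed
next
  fix \<omega> assume close: "\<omega> \<in> (\<Inter>k. \<Union>q\<in>?Q. ?B k q)"
  then have p: "\<omega> \<in> paths S" by auto
  show "\<omega> \<in> visits S c {r..t}"
  proof (rule ccontr)
    assume no_visit: "\<omega> \<notin> visits S c {r..t}"
    have cont: "continuous_on {r..t} (\<lambda>v. dist (\<omega> v) c)"
      using paths_continuous[OF p] r
      by (intro continuous_on_dist continuous_on_const) (auto intro: continuous_on_subset)
    obtain v0 where v0: "v0 \<in> {r..t}" "\<forall>v\<in>{r..t}. dist (\<omega> v0) c \<le> dist (\<omega> v) c"
      using continuous_attains_inf[OF compact_Icc _ cont] rt by auto
    have "0 < dist (\<omega> v0) c" using no_visit v0 p unfolding visits_def by auto
    then obtain k where k: "inverse (real (Suc k)) < dist (\<omega> v0) c" using reals_Archimedean by blast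
    obtain q where "q \<in> ?Q" "dist c (\<omega> q) < 1 / real (Suc k)" using close by fastforce
    then show False using v0(2)[rule_format, of q] rt k by (auto simp: dist_commute inverse_eq_divide)
  qed
qed

lemma visits_Icc_nat_filtration:
  assumes "0 \<le> r"
  shows "visits S c {r..t} \<in> sets (nat_filtration S t)"
proof (cases "r \<le> t")
  case True
  define Q where "Q = insert t (\<rat> \<inter> {r..t})"
  have "countable Q" unfolding Q_def by (simp add: countable_rat countable_Int1)
  moreover have "{\<omega> \<in> paths S. \<omega> q \<in> ball c e} \<in> sets (nat_filtration S t)" if "q \<in> Q" for q e
    using that assms True unfolding Q_def by (intro coordinate_set_nat_filtration) auto
  ultimately have "(\<Union>q\<in>Q. {\<omega> \<in> paths S. \<omega> q \<in> ball c (1 / real (Suc k))}) \<in> sets (nat_filtration S t)"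
    for k by (rule sets.countable_UN'')
  then show ?thesis
    unfolding visits_Icc_eq_countable[OF assms True] Q_def[symmetric]
    by (intro sets.countable_INT') (auto simp del: mem_ball)
qed (simp add: visits_def)

lemma visits_Icc_measurable: "0 \<le> r \<Longrightarrow> visits S c {r..t} \<in> sets (path_space S)"
  using visits_Icc_nat_filtration nat_filtration_subset by blast

lemma visits_Ico_eq_Union: "visits S c {r..<t} = (\<Union>n. visits S c {r..t - 1 / real (Suc n)})"
proof (intro equalityI subsetI)
  fix \<omega> assume "\<omega> \<in> visits S c {r..<t}"
  then obtain v where v: "\<omega> \<in> paths S" "r \<le> v" "v < t" "\<omega> v = c" unfolding visits_def by auto
  then have "0 < t - v" by simp
  then obtain n where "inverse (real (Suc n)) < t - v" using reals_Archimedean by blast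
  then show "\<omega> \<in> (\<Union>n. visits S c {r..t - 1 / real (Suc n)})"
    using v unfolding visits_def by (auto simp: inverse_eq_divide intro!: exI[of _ n] bexI[of _ v])
next
  fix \<omega> assume "\<omega> \<in> (\<Union>n. visits S c {r..t - 1 / real (Suc n)})"
  then obtain n v where v: "\<omega> \<in> paths S" "r \<le> v" "v \<le> t - 1 / real (Suc n)" "\<omega> v = c"
    unfolding visits_def by auto
  have "0 < 1 / real (Suc n)" by simp
  then have "v < t" using v(3) by linarith
  then have "v \<in> {r..<t}" using v(2) by simp
  then show "\<omega> \<in> visits S c {r..<t}" using v unfolding visits_def by blast
qed

lemma visits_Ico_measurable: "0 \<le> r \<Longrightarrow> visits S c {r..<t} \<in> sets (path_space S)"
  unfolding visits_Ico_eq_Union by (intro sets.countable_UN'' visits_Icc_measurable) auto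

lemma first_entry_event_eq_countable:
  assumes F: "finite F" and aF: "a \<in> F"
  shows "first_entry_event S F a =
    (\<Union>q\<in>\<rat> \<inter> {0..}. visits S a {0..q} - (\<Union>b\<in>F - {a}. visits S b {0..q}))"
    (is "_ = (\<Union>q\<in>_. visits S a {0..q} - (\<Union>b\<in>?G. _))")
proof (intro equalityI subsetI)
  fix \<omega> assume "\<omega> \<in> first_entry_event S F a"
  then obtain \<tau> where p: "\<omega> \<in> paths S" and \<tau>: "0 \<le> \<tau>" "\<omega> \<tau> = a" "\<And>u. 0 \<le> u \<Longrightarrow> u < \<tau> \<Longrightarrow> \<omega> u \<notin> F"
    unfolding first_entry_event_def by (auto elim: first_entryE)
  obtain q where q: "q \<in> \<rat>" "\<tau> < q" "\<And>v. 0 \<le> v \<Longrightarrow> v \<le> q \<Longrightarrow> \<omega> v \<notin> ?G"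
  proof (cases "\<exists>t\<ge>0. \<omega> t \<in> ?G")
    case True
    have closed_G: "closed ?G" using F by (intro finite_imp_closed) auto
    obtain \<sigma> where \<sigma>: "0 \<le> \<sigma>" "\<omega> \<sigma> \<in> ?G" "\<And>u. 0 \<le> u \<Longrightarrow> u < \<sigma> \<Longrightarrow> \<omega> u \<notin> ?G"
      using first_passage_time[OF p closed_G] True by metis
    have "\<tau> < \<sigma>" using \<tau> \<sigma> by (metis Diff_iff insertCI not_le order.order_iff_strict)
    then obtain q where "q \<in> \<rat>" "\<tau> < q" "q < \<sigma>" using Rats_dense_in_real by blast
    then show ?thesis using that[of q] \<sigma> by auto
  next
    case False
    obtain q where "q \<in> \<rat>" "\<tau> < q" using Rats_dense_in_real[of \<tau> "\<tau> + 1"] by auto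
    then show ?thesis using that[of q] False by auto
  qed
  have "\<omega> \<in> visits S a {0..q}" unfolding visits_def using p \<tau> q by auto
  moreover have "\<omega> \<notin> visits S b {0..q}" if "b \<in> ?G" for b unfolding visits_def using q that by auto
  moreover have "q \<in> \<rat> \<inter> {0..}" using q \<tau>(1) by auto
  ultimately show "\<omega> \<in> (\<Union>q\<in>\<rat> \<inter> {0..}. visits S a {0..q} - (\<Union>b\<in>?G. visits S b {0..q}))"
    by blast
next
  fix \<omega> assume "\<omega> \<in> (\<Union>q\<in>\<rat> \<inter> {0..}. visits S a {0..q} - (\<Union>b\<in>?G. visits S b {0..q}))"
  then obtain q where visits_a: "\<omega> \<in> visits S a {0..q}"
    and avoids_G: "\<And>b. b \<in> ?G \<Longrightarrow> \<omega> \<notin> visits S b {0..q}"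
    by blast
  then obtain v where p: "\<omega> \<in> paths S" and v: "0 \<le> v" "v \<le> q" "\<omega> v = a"
    unfolding visits_def by auto
  obtain \<tau> where \<tau>: "0 \<le> \<tau>" "\<tau> \<le> v" "\<omega> \<tau> \<in> F" "\<And>u. 0 \<le> u \<Longrightarrow> u < \<tau> \<Longrightarrow> \<omega> u \<notin> F"
    using first_passage_time[OF p finite_imp_closed[OF F] v(1)] v(3) aF by metis
  have "\<tau> \<in> {0..q}" using \<tau> v by auto
  then have "\<omega> \<tau> \<notin> ?G" using avoids_G[of "\<omega> \<tau>"] p unfolding visits_def by blast
  then have "\<omega> \<tau> = a" using \<tau>(3) by auto
  then show "\<omega> \<in> first_entry_event S F a"
    unfolding first_entry_event_def using p \<tau> aF by (auto intro: first_entryI)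
qed

lemma first_entry_event_measurable:
  assumes F: "finite F"
  shows "first_entry_event S F a \<in> sets (path_space S)"
proof (cases "a \<in> F")
  case True
  show ?thesis
    unfolding first_entry_event_eq_countable[OF F True] using F countable_rat
    by (intro sets.countable_UN'')
       (auto intro: countable_Int1 intro!: sets.Diff sets.finite_UN visits_Icc_measurable)
qed (simp add: first_entry_event_def first_entry_def)

lemma visits_eq_hitting_time_le: "visits S c {0..t} = {\<omega> \<in> paths S. hitting_time {c} \<omega> \<le> ereal t}"
proof (intro equalityI subsetI)
  fix \<omega> assume "\<omega> \<in> visits S c {0..t}"
  then show "\<omega> \<in> {\<omega> \<in> paths S. hitting_time {c} \<omega> \<le> ereal t}"
    unfolding visits_def by (auto intro: order_trans[OF hitting_time_le])
next
  fix \<omega> assume a: "\<omega> \<in> {\<omega> \<in> paths S. hitting_time {c} \<omega> \<le> ereal t}"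
  then have "hitting_time {c} \<omega> < \<infinity>" by (auto intro: le_less_trans)
  then obtain \<tau> where "hitting_time {c} \<omega> = ereal \<tau>" "0 \<le> \<tau>" "\<omega> \<tau> = c"
    using a hitting_time_finiteE[of \<omega> S "{c}"] by auto
  then show "\<omega> \<in> visits S c {0..t}" using a unfolding visits_def by auto
qed

lemma stopping_time_hitting_time: "is_stopping_time S (hitting_time {c})"
  unfolding is_stopping_time_def
  using visits_Icc_nat_filtration[of 0 S c] by (auto simp: hitting_time_nonneg visits_eq_hitting_time_le)

lemma hitting_time_finite_measurable:
  "{\<omega> \<in> paths S. hitting_time {c} \<omega> < \<infinity>} \<in> sets (path_space S)"
proof -
  have "\<exists>n. hitting_time {c} \<omega> \<le> ereal (real n)" if "hitting_time {c} \<omega> \<noteq> \<infinity>" for \<omega>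
  proof (cases "hitting_time {c} \<omega>")
    case (real r)
    then show ?thesis using real_arch_simple[of r] by auto
  qed (use that hitting_time_nonneg[of "{c}" \<omega>] in auto)
  then have "{\<omega> \<in> paths S. hitting_time {c} \<omega> < \<infinity>} = (\<Union>n. visits S c {0..real n})"
    unfolding visits_eq_hitting_time_le by (auto intro: le_less_trans)
  then show ?thesis by (simp add: sets.countable_UN'' visits_Icc_measurable)
qed

lemma paths_stopped_set: "paths S \<in> stopped_sets S (hitting_time {c})"
proof -
  have "paths S \<inter> {\<omega> \<in> paths S. hitting_time {c} \<omega> \<le> ereal t} = visits S c {0..t}" for t
    unfolding visits_eq_hitting_time_le by auto
  then show ?thesis
    unfolding stopped_sets_def using visits_Icc_nat_filtration[of 0 S c] paths_in_path_space by auto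
qed

lemma visits_stopped_set:
  assumes "0 \<le> h"
  shows "visits S c {0..h} \<in> stopped_sets S (hitting_time {c})"
  unfolding stopped_sets_def
proof (intro CollectI conjI allI impI)
  show "visits S c {0..h} \<in> sets (path_space S)" using visits_Icc_measurable by simp
  fix t :: real assume "0 \<le> t"
  have "visits S c {0..h} \<inter> {\<omega> \<in> paths S. hitting_time {c} \<omega> \<le> ereal t} = visits S c {0..min h t}"
  proof -
    have "ereal (min h t) = min (ereal h) (ereal t)" by (simp add: min_def)
    then show ?thesis unfolding visits_eq_hitting_time_le by auto
  qed
  also have "\<dots> \<in> sets (nat_filtration S t)"
    using visits_Icc_nat_filtration[of 0 S c "min h t"] nat_filtration_mono[of "min h t" t S] by auto
  finally show "visits S c {0..h} \<inter> {\<omega> \<in> paths S. hitting_time {c} \<omega> \<le> ereal t}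
    \<in> sets (nat_filtration S t)" .
qed

definition post_hitting_event :: "real \<Rightarrow> (real \<Rightarrow> real) set \<Rightarrow> (real \<Rightarrow> real) set \<Rightarrow> (real \<Rightarrow> real) set" where
  "post_hitting_event c A B =
     {\<omega> \<in> A. hitting_time {c} \<omega> < \<infinity> \<and> shift \<omega> (real_of_ereal (hitting_time {c} \<omega>)) \<in> B}"

lemma post_hitting_visitsI:
  assumes p: "\<omega> \<in> A" "\<omega> \<in> paths S"
    and not_before_a: "\<omega> \<notin> visits S c {0..<a}" and c_by_b: "\<omega> \<in> visits S c {0..b}"
    and x_after_b: "\<omega> \<in> visits S x {b..<a + t}"
  shows "\<omega> \<in> post_hitting_event c A (visits S x {0..<t})"
proof -
  have "hitting_time {c} \<omega> \<le> ereal b" using c_by_b unfolding visits_eq_hitting_time_le by auto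
  then have fin: "hitting_time {c} \<omega> < \<infinity>" by (auto intro: le_less_trans)
  then obtain \<tau> where \<tau>: "hitting_time {c} \<omega> = ereal \<tau>" "0 \<le> \<tau>" "\<omega> \<tau> = c"
    using hitting_time_finiteE[OF p(2), of "{c}"] by auto
  have "\<tau> \<le> b" using \<open>hitting_time {c} \<omega> \<le> ereal b\<close> \<tau> by simp
  have "a \<le> \<tau>" using not_before_a \<tau> p unfolding visits_def by force
  obtain u where u: "b \<le> u" "u < a + t" "\<omega> u = x" using x_after_b unfolding visits_def by auto
  have "shift \<omega> \<tau> \<in> visits S x {0..<t}"
    unfolding visits_def using shift_in_paths[OF p(2) \<tau>(2)] u \<open>\<tau> \<le> b\<close> \<open>a \<le> \<tau>\<close>
    by (auto simp: shift_def intro!: bexI[of _ "u - \<tau>"])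
  then show ?thesis unfolding post_hitting_event_def using p fin \<tau> by simp
qed

lemma post_hitting_visitsE:
  assumes \<omega>: "\<omega> \<in> post_hitting_event c A (visits S x {0..<t})" and "c \<noteq> x" "A \<subseteq> paths S"
  obtains a b where "a \<in> \<rat> \<inter> {0..}" "b \<in> \<rat> \<inter> {0..}" "\<omega> \<in> A" "\<omega> \<in> paths S"
    "\<omega> \<notin> visits S c {0..<a}" "\<omega> \<in> visits S c {0..b}" "\<omega> \<in> visits S x {b..<a + t}"
proof -
  have p: "\<omega> \<in> paths S" "\<omega> \<in> A" using \<omega> assms(3) by (auto simp: post_hitting_event_def)
  obtain \<tau> where \<tau>: "hitting_time {c} \<omega> = ereal \<tau>" "0 \<le> \<tau>" "\<omega> \<tau> = c"
    "\<And>u. 0 \<le> u \<Longrightarrow> u < \<tau> \<Longrightarrow> \<omega> u \<noteq> c"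
    using hitting_time_finiteE[OF p(1), of "{c}"] \<omega> by (auto simp: post_hitting_event_def)
  from \<omega> have "shift \<omega> (real_of_ereal (hitting_time {c} \<omega>)) \<in> visits S x {0..<t}"
    unfolding post_hitting_event_def by blast
  then have "\<exists>v\<in>{0..<t}. shift \<omega> \<tau> v = x" unfolding \<tau>(1) visits_def by simp
  then obtain v where v: "0 \<le> v" "v < t" "\<omega> (\<tau> + v) = x"
    unfolding shift_def by auto
  have "v \<noteq> 0" using v(3) \<tau>(3) assms(2) by auto
  then have "\<tau> < \<tau> + v" using v(1) by simp
  then obtain b where b: "b \<in> \<rat>" "\<tau> < b" "b < \<tau> + v" using Rats_dense_in_real by blast
  obtain a where a: "a \<in> \<rat>" "0 \<le> a" "a \<le> \<tau>" "\<tau> + v - t < a"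
  proof (cases "\<tau> + v - t < 0")
    case False
    have "\<tau> + v - t < \<tau>" using v(2) by simp
    then obtain a where "a \<in> \<rat>" "\<tau> + v - t < a" "a < \<tau>" using Rats_dense_in_real by blast
    then show ?thesis using that[of a] False by auto
  qed (use that[of 0] \<tau>(2) in auto)
  have "\<omega> v \<noteq> c" if "v \<in> {0..<a}" for v using \<tau>(4)[of v] that a(3) by auto
  then have "\<omega> \<notin> visits S c {0..<a}" by (auto simp: visits_def)
  moreover have "\<omega> \<in> visits S c {0..b}"
    unfolding visits_def using p(1) \<tau>(2,3) b(2) by (auto intro!: bexI[of _ \<tau>])
  moreover have "\<omega> \<in> visits S x {b..<a + t}"
    unfolding visits_def using p(1) v b(3) a(4) by (auto intro!: bexI[of _ "\<tau> + v"])
  ultimately show ?thesis using that[of a b] a b \<tau>(2) p by auto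
qed

lemma post_hitting_visits_eq:
  assumes "c \<noteq> x" and "A \<subseteq> paths S"
  shows "post_hitting_event c A (visits S x {0..<t}) =
    A \<inter> (\<Union>(a, b)\<in>(\<rat> \<inter> {0..}) \<times> (\<rat> \<inter> {0..}).
            (paths S - visits S c {0..<a}) \<inter> visits S c {0..b} \<inter> visits S x {b..<a + t})"
proof (intro equalityI subsetI)
  fix \<omega> assume "\<omega> \<in> post_hitting_event c A (visits S x {0..<t})"
  then obtain a b where "a \<in> \<rat> \<inter> {0..}" "b \<in> \<rat> \<inter> {0..}" "\<omega> \<in> A" "\<omega> \<in> paths S"
    "\<omega> \<notin> visits S c {0..<a}" "\<omega> \<in> visits S c {0..b}" "\<omega> \<in> visits S x {b..<a + t}"
    by (rule post_hitting_visitsE[OF _ assms])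
  then show "\<omega> \<in> A \<inter> (\<Union>(a, b)\<in>(\<rat> \<inter> {0..}) \<times> (\<rat> \<inter> {0..}).
      (paths S - visits S c {0..<a}) \<inter> visits S c {0..b} \<inter> visits S x {b..<a + t})"
    by blast
next
  fix \<omega> assume "\<omega> \<in> A \<inter> (\<Union>(a, b)\<in>(\<rat> \<inter> {0..}) \<times> (\<rat> \<inter> {0..}).
      (paths S - visits S c {0..<a}) \<inter> visits S c {0..b} \<inter> visits S x {b..<a + t})"
  then show "\<omega> \<in> post_hitting_event c A (visits S x {0..<t})"
    by (blast intro: post_hitting_visitsI)
qed

lemma post_hitting_visits_measurable:
  assumes "c \<noteq> x" and "A \<in> sets (path_space S)"
  shows "post_hitting_event c A (visits S x {0..<t}) \<in> sets (path_space S)"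
proof -
  have A: "A \<subseteq> paths S" using assms(2) sets.sets_into_space space_path_space by blast
  have "countable ((\<rat> \<inter> {0..}) \<times> (\<rat> \<inter> {0..}) :: (real \<times> real) set)"
    using countable_rat by (intro countable_SIGMA) (auto intro: countable_Int1)
  then show ?thesis
    unfolding post_hitting_visits_eq[OF assms(1) A]
    using assms(2) paths_in_path_space
    by (intro sets.Int sets.countable_UN') (auto intro!: sets.Diff visits_Ico_measurable visits_Icc_measurable)
qed

lemma visits_through:
  assumes p: "\<omega> \<in> paths S" and btw: "y \<in> {min (\<omega> 0) x<..<max (\<omega> 0) x}"
    and visit: "\<omega> \<in> visits S x {0..<t}"
  shows "\<omega> \<in> post_hitting_event y (paths S) (visits S x {0..<t})"
proof -
  obtain v where v: "0 \<le> v" "v < t" "\<omega> v = x" using visit unfolding visits_def by auto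
  then obtain u where u: "0 \<le> u" "u < v" "\<omega> u = y"
    using path_crosses[OF p v(1)] btw by blast
  then have "hitting_time {y} \<omega> < \<infinity>"
    using hitting_time_le[of u \<omega> "{y}"] by (auto intro: le_less_trans)
  then obtain \<tau> where \<tau>: "hitting_time {y} \<omega> = ereal \<tau>" "0 \<le> \<tau>"
    using hitting_time_finiteE[OF p, of "{y}"] by auto
  have "\<tau> \<le> u" using \<tau>(1) hitting_time_le[of u \<omega> "{y}"] u by simp
  then have "v - \<tau> \<in> {0..<t}" "shift \<omega> \<tau> (v - \<tau>) = x"
    using u v \<tau>(2) by (auto simp: shift_def)
  then have "shift \<omega> \<tau> \<in> visits S x {0..<t}"
    unfolding visits_def using shift_in_paths[OF p \<tau>(2)] by blast
  then show ?thesis unfolding post_hitting_event_def using p \<tau> by simp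
qed

lemma visits_after_first_hit:
  assumes p: "\<omega> \<in> paths S" and z_first: "\<not> first_entry {x, z} x \<omega>" and "x \<noteq> z"
    and visit: "\<omega> \<in> visits S x {0..<t}"
  shows "\<omega> \<in> post_hitting_event z (visits S z {0..h}) (visits S x {0..<t}) \<union>
    post_hitting_event z (paths S) (visits S x {0..<t - h})"
proof -
  obtain v where v: "0 \<le> v" "v < t" "\<omega> v = x" using visit unfolding visits_def by auto
  obtain \<tau> where \<tau>: "0 \<le> \<tau>" "\<tau> \<le> v" "\<omega> \<tau> \<in> {x, z}" "\<And>u. 0 \<le> u \<Longrightarrow> u < \<tau> \<Longrightarrow> \<omega> u \<notin> {x, z}"
    using first_passage_time[OF p _ v(1), of "{x, z}"] v(3) by auto
  have "\<omega> \<tau> \<noteq> x" using z_first \<tau> first_entryI[of x "{x, z}" \<tau> \<omega>] by auto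
  then have \<tau>z: "\<omega> \<tau> = z" using \<tau>(3) by auto
  have hit: "hitting_time {z} \<omega> = ereal \<tau>" using \<tau> \<tau>z by (intro hitting_time_eq) auto
  have "\<tau> < v" using \<tau>(2) \<tau>z v(3) \<open>x \<noteq> z\<close> by (cases "\<tau> = v") auto
  then have "v - \<tau> \<in> {0..<t'}" "shift \<omega> \<tau> (v - \<tau>) = x" if "v - \<tau> < t'" for t'
    using that v(3) by (auto simp: shift_def)
  then have shifted: "shift \<omega> \<tau> \<in> visits S x {0..<t'}" if "v - \<tau> < t'" for t'
    unfolding visits_def using shift_in_paths[OF p \<tau>(1)] that by blast
  show ?thesis
  proof (cases "\<tau> \<le> h")
    case True
    then have "\<omega> \<in> visits S z {0..h}" unfolding visits_def using p \<tau>(1) \<tau>z by auto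
    then show ?thesis unfolding post_hitting_event_def using hit shifted[of t] v \<tau>(1) by auto
  next
    case False
    then show ?thesis unfolding post_hitting_event_def using hit shifted[of "t - h"] v p by auto
  qed
qed

section \<open>Hitting probabilities of recurrent diffusions\<close>

lemma renewal_inequality_imp_zero:
  fixes f :: "real \<Rightarrow> real"
  assumes nonneg: "\<And>t. 0 \<le> f t" and initial: "\<And>t. t \<le> 0 \<Longrightarrow> f t = 0"
    and renewal: "\<And>t. f t \<le> p * f t + f (t - h)" and "p < 1" "0 < h"
  shows "f t = 0"
proof -
  have "\<forall>t. t \<le> real n * h \<longrightarrow> f t = 0" for n
  proof (induction n)
    case (Suc n)
    show ?case
    proof (intro allI impI)
      fix t assume "t \<le> real (Suc n) * h"
      then have "f (t - h) = 0" using Suc by (simp add: algebra_simps)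
      then have "(1 - p) * f t \<le> 0" using renewal[of t] by (simp add: algebra_simps)
      then show "f t = 0" using nonneg[of t] \<open>p < 1\<close> by (simp add: mult_le_0_iff)
    qed
  qed (simp add: initial)
  moreover obtain n where "t / h \<le> real n" using real_arch_simple by blast
  ultimately show ?thesis using \<open>0 < h\<close> by (simp add: divide_le_eq)
qed

locale diffusion_process =
  fixes S :: "real set" and P :: "real \<Rightarrow> (real \<Rightarrow> real) measure"
  assumes diffusion: "diffusion S P"
begin

lemma prob_space_P: "x \<in> S \<Longrightarrow> prob_space (P x)"
  and sets_P: "x \<in> S \<Longrightarrow> sets (P x) = sets (path_space S)"
  and AE_start: "x \<in> S \<Longrightarrow> AE \<omega> in P x. \<omega> 0 = x"
  using diffusion unfolding diffusion_def by auto

lemma space_P: "x \<in> S \<Longrightarrow> space (P x) = paths S"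
  using sets_P sets_eq_imp_space_eq space_path_space by metis

lemma AE_paths: "x \<in> S \<Longrightarrow> AE \<omega> in P x. \<omega> \<in> paths S"
  using AE_space[of "P x"] space_P by simp

lemma strong_Markov_hitting_time:
  assumes c: "c \<in> S" and x: "x \<in> S"
    and A: "A \<in> stopped_sets S (hitting_time {c})" and B: "B \<in> sets (path_space S)"
  shows "measure (P x) (post_hitting_event c A B) =
         measure (P x) {\<omega> \<in> A. hitting_time {c} \<omega> < \<infinity>} * measure (P c) B"
proof -
  have A_paths: "A \<subseteq> paths S"
    using A sets.sets_into_space space_path_space unfolding stopped_sets_def by blast
  define E where "E = {\<omega> \<in> A. hitting_time {c} \<omega> < \<infinity>}"
  have "E = A \<inter> {\<omega> \<in> paths S. hitting_time {c} \<omega> < \<infinity>}" unfolding E_def using A_paths by auto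
  then have E: "E \<in> sets (P x)"
    using A hitting_time_finite_measurable sets_P[OF x] unfolding stopped_sets_def by auto
  have "emeasure (P x) (post_hitting_event c A B) =
      (\<integral>\<^sup>+ \<omega>. indicator E \<omega> * emeasure (P (stopped_value (hitting_time {c}) \<omega>)) B \<partial>P x)"
    using diffusion stopping_time_hitting_time[of S c] x A B
    unfolding diffusion_def E_def post_hitting_event_def by blast
  also have "\<dots> = (\<integral>\<^sup>+ \<omega>. indicator E \<omega> * emeasure (P c) B \<partial>P x)"
  proof (intro nn_integral_cong)
    fix \<omega>
    show "indicator E \<omega> * emeasure (P (stopped_value (hitting_time {c}) \<omega>)) B =
          indicator E \<omega> * emeasure (P c) B"
    proof (cases "\<omega> \<in> E")
      case True
      then have "\<omega> \<in> paths S" "hitting_time {c} \<omega> < \<infinity>" unfolding E_def using A_paths by auto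
      then have "stopped_value (hitting_time {c}) \<omega> = c"
        unfolding stopped_value_def by (elim hitting_time_finiteE) auto
      then show ?thesis by simp
    qed simp
  qed
  also have "\<dots> = emeasure (P x) E * emeasure (P c) B"
    using E by (simp add: nn_integral_multc nn_integral_indicator)
  finally show ?thesis unfolding measure_def E_def by (simp add: enn2real_mult)
qed

lemma trans_prob_eq_first_entry:
  assumes "finite D" "x \<in> D" "D \<subseteq> S"
  shows "trans_prob P D x y = measure (P x) (first_entry_event S (D - {x}) y)"
proof -
  have x: "x \<in> S" using assms by auto
  have "tau D 2 \<omega> < \<infinity> \<and> stopped_value (tau D 2) \<omega> = y \<longleftrightarrow>
      (\<exists>a\<in>D. first_entry D a \<omega> \<and> first_entry (D - {a}) y \<omega>)" if "\<omega> \<in> paths S" for \<omega>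
    using tau_2_iff_first_entries[OF that assms(1)] first_entry_in by blast
  then have event_eq: "{\<omega> \<in> space (P x). tau D 2 \<omega> < \<infinity> \<and> stopped_value (tau D 2) \<omega> = y} =
      (\<Union>a\<in>D. first_entry_event S D a \<inter> first_entry_event S (D - {a}) y)"
    unfolding space_P[OF x] first_entry_event_def by blast
  have "(\<Union>a\<in>D. first_entry_event S D a \<inter> first_entry_event S (D - {a}) y) \<in> sets (P x)"
    unfolding sets_P[OF x] using assms(1) by (intro sets.finite_UN sets.Int first_entry_event_measurable) auto
  moreover have "first_entry_event S (D - {x}) y \<in> sets (P x)"
    unfolding sets_P[OF x] using assms(1) by (intro first_entry_event_measurable) auto
  moreover have "AE \<omega> in P x. \<omega> \<in> (\<Union>a\<in>D. first_entry_event S D a \<inter> first_entry_event S (D - {a}) y)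
      \<longleftrightarrow> \<omega> \<in> first_entry_event S (D - {x}) y"
    using AE_start[OF x] by eventually_elim (use first_entry_at_start assms(2) in \<open>auto simp: first_entry_event_def\<close>)
  ultimately show ?thesis unfolding trans_prob_def event_eq by (intro measure_eq_AE)
qed

lemma first_entry_blocked:
  assumes "x \<in> S" "w \<in> F" "w \<in> {min x y<..<max x y}"
  shows "measure (P x) (first_entry_event S F y) = 0"
proof -
  interpret prob_space "P x" using prob_space_P assms(1) .
  have "AE \<omega> in P x. \<omega> \<in> first_entry_event S F y \<longrightarrow> \<omega> \<in> {}"
    using AE_start[OF assms(1)]
  proof eventually_elim
    case (elim \<omega>)
    show ?case
    proof
      assume "\<omega> \<in> first_entry_event S F y"
      then obtain \<tau> where p: "\<omega> \<in> paths S" and \<tau>: "0 \<le> \<tau>" "\<omega> \<tau> = y"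
        "\<And>u. 0 \<le> u \<Longrightarrow> u < \<tau> \<Longrightarrow> \<omega> u \<notin> F"
        unfolding first_entry_event_def by (auto elim: first_entryE)
      obtain u where "0 \<le> u" "u < \<tau>" "\<omega> u = w"
        using path_crosses[OF p \<tau>(1), of w] elim \<tau>(2) assms(3) by auto
      then show "\<omega> \<in> {}" using \<tau>(3) assms(2) by auto
    qed
  qed
  then have "measure (P x) (first_entry_event S F y) \<le> measure (P x) {}"
    by (intro finite_measure_mono_AE) auto
  then show ?thesis using measure_nonneg[of "P x"] by (simp add: order_antisym)
qed

text \<open>Started at \<open>z\<close>, the path must pass \<open>y\<close> before reaching \<open>x\<close>; then restart at \<open>y\<close>.\<close>

lemma visits_from_far_le:
  assumes y: "y \<in> S" and z: "z \<in> S" and btw: "y \<in> {min x z<..<max x z}"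
  shows "measure (P z) (visits S x {0..<t}) \<le> measure (P y) (visits S x {0..<t})"
proof -
  interpret Pz: prob_space "P z" using prob_space_P[OF z] .
  define E where "E = post_hitting_event y (paths S) (visits S x {0..<t})"
  have "measure (P z) E = measure (P z) {\<omega> \<in> paths S. hitting_time {y} \<omega> < \<infinity>} * measure (P y) (visits S x {0..<t})"
    unfolding E_def using y z by (intro strong_Markov_hitting_time paths_stopped_set visits_Ico_measurable) auto
  also have "\<dots> \<le> measure (P y) (visits S x {0..<t})"
    by (intro mult_left_le_one_le Pz.prob_le_1) auto
  finally have le: "measure (P z) E \<le> measure (P y) (visits S x {0..<t})" .
  have "E \<in> sets (P z)"
    unfolding E_def sets_P[OF z] using btw paths_in_path_space
    by (intro post_hitting_visits_measurable) auto
  moreover have "AE \<omega> in P z. \<omega> \<in> visits S x {0..<t} \<longrightarrow> \<omega> \<in> E"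
    using AE_start[OF z] AE_paths[OF z]
    by eventually_elim (use btw in \<open>auto simp: E_def min.commute max.commute intro: visits_through\<close>)
  ultimately have "measure (P z) (visits S x {0..<t}) \<le> measure (P z) E"
    by (intro Pz.finite_measure_mono_AE)
  with le show ?thesis by linarith
qed

lemma short_time_visit_prob_lt_1:
  assumes y: "y \<in> S" and "y \<noteq> z"
  obtains h where "0 < h" "measure (P y) (visits S z {0..h}) < 1"
proof (rule ccontr)
  interpret Py: prob_space "P y" using prob_space_P[OF y] .
  assume "\<not> thesis"
  have "measure (P y) (visits S z {0..1 / real (Suc n)}) = 1" for n
  proof -
    have "0 < 1 / real (Suc n)" by simp
    then have "\<not> measure (P y) (visits S z {0..1 / real (Suc n)}) < 1" using that \<open>\<not> thesis\<close> by blast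
    then show ?thesis using Py.prob_le_1[of "visits S z {0..1 / real (Suc n)}"] by linarith
  qed
  then have "AE \<omega> in P y. \<omega> \<in> visits S z {0..1 / real (Suc n)}" for n
    using visits_Icc_measurable[of 0 S z] sets_P[OF y] by (subst Py.AE_in_set_eq_1) auto
  then have "AE \<omega> in P y. \<forall>n. \<omega> \<in> visits S z {0..1 / real (Suc n)}" by (simp add: AE_all_countable)
  then have "AE \<omega> in P y. False" using AE_start[OF y] AE_paths[OF y]
  proof eventually_elim
    case (elim \<omega>)
    then have le: "hitting_time {z} \<omega> \<le> ereal (1 / real (Suc n))" for n
      unfolding visits_eq_hitting_time_le by auto
    then have "hitting_time {z} \<omega> < \<infinity>" by (auto intro: le_less_trans)
    then obtain \<tau> where \<tau>: "hitting_time {z} \<omega> = ereal \<tau>" "0 \<le> \<tau>" "\<omega> \<tau> = z"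
      using hitting_time_finiteE[OF elim(3), of "{z}"] by auto
    have "\<tau> \<le> inverse (real (Suc n))" for n using le[of n] \<tau>(1) by (simp add: inverse_eq_divide)
    then have "\<tau> = 0"
      using \<tau>(2) reals_Archimedean by (metis not_le order.antisym)
    then show False using \<tau>(3) elim(2) \<open>y \<noteq> z\<close> by simp
  qed
  then show False by simp
qed

text \<open>Under the hypothesis a path from \<open>y\<close> reaching \<open>x\<close> passes \<open>z\<close> first; split according to
  whether this happens by time \<open>h\<close> and restart at \<open>z\<close>.\<close>

lemma visits_renewal_bound:
  assumes y: "y \<in> S" and z: "z \<in> S" and "x \<noteq> z" and "0 \<le> h"
    and z_first: "AE \<omega> in P y. \<omega> \<notin> first_entry_event S {x, z} x"
  shows "measure (P y) (visits S x {0..<t}) \<le>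
    measure (P y) (visits S z {0..h}) * measure (P z) (visits S x {0..<t}) +
    measure (P z) (visits S x {0..<t - h})"
proof -
  interpret Py: prob_space "P y" using prob_space_P[OF y] .
  define E1 where "E1 = post_hitting_event z (visits S z {0..h}) (visits S x {0..<t})"
  define E2 where "E2 = post_hitting_event z (paths S) (visits S x {0..<t - h})"
  have E1: "E1 \<in> sets (P y)" and E2: "E2 \<in> sets (P y)"
    unfolding E1_def E2_def sets_P[OF y] using \<open>x \<noteq> z\<close> \<open>0 \<le> h\<close> paths_in_path_space
    by (auto intro!: post_hitting_visits_measurable visits_Icc_measurable)
  have "measure (P y) E1 = measure (P y) {\<omega> \<in> visits S z {0..h}. hitting_time {z} \<omega> < \<infinity>}
      * measure (P z) (visits S x {0..<t})"
    unfolding E1_def using y z \<open>0 \<le> h\<close>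
    by (intro strong_Markov_hitting_time visits_stopped_set visits_Ico_measurable) auto
  also have "\<dots> \<le> measure (P y) (visits S z {0..h}) * measure (P z) (visits S x {0..<t})"
    using visits_Icc_measurable[of 0 S z h] sets_P[OF y] \<open>0 \<le> h\<close>
    by (intro mult_right_mono Py.finite_measure_mono) auto
  finally have 1: "measure (P y) E1 \<le> measure (P y) (visits S z {0..h}) * measure (P z) (visits S x {0..<t})" .
  have "measure (P y) E2 = measure (P y) {\<omega> \<in> paths S. hitting_time {z} \<omega> < \<infinity>}
      * measure (P z) (visits S x {0..<t - h})"
    unfolding E2_def using y z by (intro strong_Markov_hitting_time paths_stopped_set visits_Ico_measurable) auto
  also have "\<dots> \<le> measure (P z) (visits S x {0..<t - h})"
    by (intro mult_left_le_one_le Py.prob_le_1) auto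
  finally have 2: "measure (P y) E2 \<le> measure (P z) (visits S x {0..<t - h})" .
  have "AE \<omega> in P y. \<omega> \<in> visits S x {0..<t} \<longrightarrow> \<omega> \<in> E1 \<union> E2"
    using AE_paths[OF y] z_first
    by eventually_elim (use \<open>x \<noteq> z\<close> in \<open>auto simp: E1_def E2_def first_entry_event_def
        dest: visits_after_first_hit\<close>)
  then have "measure (P y) (visits S x {0..<t}) \<le> measure (P y) (E1 \<union> E2)"
    using E1 E2 by (intro Py.finite_measure_mono_AE) auto
  also have "\<dots> \<le> measure (P y) E1 + measure (P y) E2" using E1 E2 by (rule measure_Un_le)
  finally show ?thesis using 1 2 by linarith
qed

end

locale recurrent_diffusion = diffusion_process +
  assumes recurrent: "recurrent S P"
begin

lemma AE_visits: "x \<in> S \<Longrightarrow> y \<in> S \<Longrightarrow> AE \<omega> in P x. \<exists>t\<ge>0. \<omega> t = y"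
  using recurrent unfolding recurrent_def by blast

text \<open>Otherwise \<open>f t = P\<^sub>y(x is visited before t)\<close> satisfies \<open>f t \<le> p f t + f (t - h)\<close> with
  \<open>p < 1\<close>, so \<open>f = 0\<close>, contradicting recurrence.\<close>

lemma first_entry_between_pos:
  assumes x: "x \<in> S" and y: "y \<in> S" and z: "z \<in> S" and btw: "y \<in> {min x z<..<max x z}"
  shows "0 < measure (P y) (first_entry_event S {x, z} x)"
proof (rule ccontr)
  interpret Py: prob_space "P y" using prob_space_P[OF y] .
  assume "\<not> 0 < measure (P y) (first_entry_event S {x, z} x)"
  then have "measure (P y) (first_entry_event S {x, z} x) = 0"
    using measure_nonneg[of "P y"] by (meson not_less order.antisym)
  then have z_first: "AE \<omega> in P y. \<omega> \<notin> first_entry_event S {x, z} x"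
    using Py.prob_eq_0 first_entry_event_measurable sets_P[OF y] by auto
  have "x \<noteq> z" "y \<noteq> z" using btw by auto
  obtain h where h: "0 < h" "measure (P y) (visits S z {0..h}) < 1"
    using short_time_visit_prob_lt_1[OF y \<open>y \<noteq> z\<close>] by blast
  define p where "p = measure (P y) (visits S z {0..h})"
  define f where "f t = measure (P y) (visits S x {0..<t})" for t
  have "f t = 0" for t
  proof (rule renewal_inequality_imp_zero[where f = f and p = p and h = h])
    show "f t \<le> p * f t + f (t - h)" for t
    proof -
      have "f t \<le> p * measure (P z) (visits S x {0..<t}) + measure (P z) (visits S x {0..<t - h})"
        unfolding f_def p_def using visits_renewal_bound[OF y z \<open>x \<noteq> z\<close> _ z_first] h by simp
      also have "\<dots> \<le> p * f t + f (t - h)"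
        unfolding f_def using visits_from_far_le[OF y z btw] by (intro add_mono mult_left_mono) (auto simp: p_def)
      finally show ?thesis .
    qed
    show "f t = 0" if "t \<le> 0" for t
    proof -
      have "visits S x {0..<t} = {}" using that by (auto simp: visits_def)
      then show ?thesis by (simp add: f_def)
    qed
  qed (use h in \<open>auto simp: f_def p_def\<close>)
  then have "AE \<omega> in P y. \<omega> \<notin> visits S x {0..<real n}" for n
    using visits_Ico_measurable[of 0 S x] sets_P[OF y] Py.prob_eq_0 unfolding f_def by auto
  then have "AE \<omega> in P y. \<forall>n. \<omega> \<notin> visits S x {0..<real n}" by (simp add: AE_all_countable)
  then have "AE \<omega> in P y. False" using AE_visits[OF y x] AE_paths[OF y]
  proof eventually_elim
    case (elim \<omega>)
    then obtain t where "0 \<le> t" "\<omega> t = x" by auto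
    moreover obtain n where "t < real n" using reals_Archimedean2 by blast
    ultimately show False using elim unfolding visits_def by auto
  qed
  then show False by simp
qed

lemma first_entry_prob_sum:
  assumes D: "finite D" "D \<subseteq> S" and x: "x \<in> D" and z: "z \<in> D" "z \<noteq> x"
  shows "(\<Sum>y\<in>D. measure (P x) (first_entry_event S (D - {x}) y)) = 1"
proof -
  have xS: "x \<in> S" and zS: "z \<in> S" using x z D by auto
  interpret Px: prob_space "P x" using prob_space_P[OF xS] .
  have events: "first_entry_event S (D - {x}) y \<in> sets (P x)" for y
    unfolding sets_P[OF xS] using D by (intro first_entry_event_measurable) auto
  have "disjoint_family_on (first_entry_event S (D - {x})) D"
    unfolding disjoint_family_on_def first_entry_event_def using first_entry_unique by blast
  then have "(\<Sum>y\<in>D. measure (P x) (first_entry_event S (D - {x}) y)) =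
      measure (P x) (\<Union>y\<in>D. first_entry_event S (D - {x}) y)"
    using D events by (intro Px.finite_measure_finite_Union[symmetric]) auto
  also have "\<dots> = 1"
  proof -
    have "AE \<omega> in P x. \<omega> \<in> (\<Union>y\<in>D. first_entry_event S (D - {x}) y)"
      using AE_visits[OF xS zS] AE_paths[OF xS]
    proof eventually_elim
      case (elim \<omega>)
      then obtain t0 where t0: "0 \<le> t0" "\<omega> t0 = z" by auto
      have cl: "closed (D - {x})" using D by (intro finite_imp_closed) auto
      have mem: "\<omega> t0 \<in> D - {x}" using t0 z by auto
      obtain \<tau> where \<tau>: "0 \<le> \<tau>" "\<omega> \<tau> \<in> D - {x}" "\<And>u. 0 \<le> u \<Longrightarrow> u < \<tau> \<Longrightarrow> \<omega> u \<notin> D - {x}"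
        using first_passage_time[OF elim(2) cl t0(1) mem] by metis
      then have "\<omega> \<in> first_entry_event S (D - {x}) (\<omega> \<tau>)"
        unfolding first_entry_event_def using elim(2) by (auto intro: first_entryI)
      then show ?case using \<tau>(2) by auto
    qed
    then show ?thesis using D events by (subst Px.AE_in_set_eq_1[symmetric]) auto
  qed
  finally show ?thesis .
qed

lemma first_entry_interior_pos:
  assumes D: "finite D" "D \<subseteq> S" and x: "x \<in> D" and y: "y \<in> D" and z: "z \<in> D"
    and btw: "x \<in> {min y z<..<max y z}" and gap: "D \<inter> {min y z<..<max y z} \<subseteq> {x}"
  shows "0 < measure (P x) (first_entry_event S (D - {x}) y)"
proof -
  have xS: "x \<in> S" using x D by auto
  interpret Px: prob_space "P x" using prob_space_P[OF xS] .
  have "AE \<omega> in P x. \<omega> \<in> first_entry_event S {y, z} y \<longrightarrow> \<omega> \<in> first_entry_event S (D - {x}) y"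
    using AE_start[OF xS]
    by eventually_elim (use btw gap y in \<open>auto simp: first_entry_event_def intro: first_entry_from_gap\<close>)
  then have "measure (P x) (first_entry_event S {y, z} y) \<le> measure (P x) (first_entry_event S (D - {x}) y)"
    using D sets_P[OF xS] by (intro Px.finite_measure_mono_AE) (auto intro: first_entry_event_measurable)
  moreover have "0 < measure (P x) (first_entry_event S {y, z} y)"
    using first_entry_between_pos[OF _ xS] y z D btw by auto
  ultimately show ?thesis by linarith
qed

lemma first_entry_boundary_pos:
  assumes D: "finite D" "D \<subseteq> S" and x: "x \<in> D" and y: "y \<in> D" "y \<noteq> x"
    and side: "\<And>w. w \<in> D - {x} \<Longrightarrow> y \<in> {min x w..max x w}"
  shows "0 < measure (P x) (first_entry_event S (D - {x}) y)"
proof -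
  have xS: "x \<in> S" and yS: "y \<in> S" using x y D by auto
  interpret Px: prob_space "P x" using prob_space_P[OF xS] .
  have "AE \<omega> in P x. \<omega> \<in> first_entry_event S (D - {x}) y"
    using AE_visits[OF xS yS] AE_paths[OF xS] AE_start[OF xS]
  proof eventually_elim
    case (elim \<omega>)
    then obtain t0 where t0: "0 \<le> t0" "\<omega> t0 = y" by auto
    have cl: "closed (D - {x})" using D by (intro finite_imp_closed) auto
    have mem: "\<omega> t0 \<in> D - {x}" using t0 y by auto
    obtain \<tau> where \<tau>: "0 \<le> \<tau>" "\<omega> \<tau> \<in> D - {x}" "\<And>u. 0 \<le> u \<Longrightarrow> u < \<tau> \<Longrightarrow> \<omega> u \<notin> D - {x}"
      using first_passage_time[OF elim(2) cl t0(1) mem] by metis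
    have "\<omega> \<tau> = y"
    proof (rule ccontr)
      assume "\<omega> \<tau> \<noteq> y"
      then have "y \<in> {min (\<omega> 0) (\<omega> \<tau>)<..<max (\<omega> 0) (\<omega> \<tau>)}"
        using side[OF \<tau>(2)] elim(3) y(2) by (auto simp: min_def max_def)
      then obtain u where "0 \<le> u" "u < \<tau>" "\<omega> u = y" using path_crosses[OF elim(2) \<tau>(1)] by blast
      then show False using \<tau>(3) y by auto
    qed
    then show ?case unfolding first_entry_event_def using elim(2) \<tau> by (auto intro: first_entryI)
  qed
  then have "measure (P x) (first_entry_event S (D - {x}) y) = 1"
    using D sets_P[OF xS] by (subst Px.AE_in_set_eq_1[symmetric]) (auto intro: first_entry_event_measurable)
  then show ?thesis by simp
qed

text \<open>Neighbouring points of \<open>D\<close> communicate: if some point of \<open>D\<close> lies beyond \<open>x\<close>, the nearest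
  such point plays the role of \<open>z\<close> in \<open>first_entry_interior_pos\<close>.\<close>

lemma first_entry_adjacent_pos:
  assumes D: "finite D" "D \<subseteq> S" and x: "x \<in> D" and y: "y \<in> D" "y \<noteq> x"
    and adjacent: "D \<inter> {min x y<..<max x y} = {}"
  shows "0 < measure (P x) (first_entry_event S (D - {x}) y)"
proof -
  define B where "B = {w \<in> D. x \<in> {min y w<..<max y w}}"
  show ?thesis
  proof (cases "B = {}")
    case True
    have "y \<in> {min x w..max x w}" if "w \<in> D - {x}" for w
    proof -
      have "x \<notin> {min y w<..<max y w}" using True that unfolding B_def by auto
      moreover have "w \<notin> {min x y<..<max x y}" using adjacent that by auto
      ultimately show ?thesis using that y(2) by (auto simp: min_def max_def split: if_splits)
    qed
    then show ?thesis using first_entry_boundary_pos[OF D x y] by blast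
  next
    case False
    have "finite B" using D unfolding B_def by simp
    then obtain z where z: "z \<in> B" and nearest: "\<And>w. w \<in> B \<Longrightarrow> \<bar>z - x\<bar> \<le> \<bar>w - x\<bar>"
      using ex_is_arg_min_if_finite[OF _ False, of "\<lambda>w. \<bar>w - x\<bar>"] by (auto simp: is_arg_min_linorder)
    have "w = x" if "w \<in> D" "w \<in> {min y z<..<max y z}" for w
    proof (rule ccontr)
      assume "w \<noteq> x"
      with that adjacent z have "w \<in> B" "\<bar>w - x\<bar> < \<bar>z - x\<bar>"
        unfolding B_def by (auto simp: min_def max_def split: if_splits)
      then show False using nearest by fastforce
    qed
    then show ?thesis using z unfolding B_def by (intro first_entry_interior_pos[OF D x y(1)]) auto
  qed
qed

end

section \<open>Powers of stochastic matrices\<close>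

lemma index_mult_mat_sum:
  assumes "A \<in> carrier_mat m k" "B \<in> carrier_mat k n" "i < m" "j < n"
  shows "(A * B) $$ (i, j) = (\<Sum>l<k. A $$ (i, l) * B $$ (l, j))"
  using assms by (simp add: scalar_prod_def lessThan_atLeast0)

lemma pow_mat_add:
  assumes "A \<in> carrier_mat m m"
  shows "A ^\<^sub>m (a + b) = A ^\<^sub>m a * A ^\<^sub>m b"
proof (induction b)
  case (Suc b)
  have "A ^\<^sub>m (a + Suc b) = (A ^\<^sub>m a * A ^\<^sub>m b) * A" by (simp add: Suc)
  also have "\<dots> = A ^\<^sub>m a * (A ^\<^sub>m b * A)" using assms by (intro assoc_mult_mat) auto
  finally show ?case by simp
qed (use assms in simp)

lemma pow_mat_nonneg:
  fixes M :: "real mat"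
  assumes M: "M \<in> carrier_mat m m" and nonneg: "\<And>i j. i < m \<Longrightarrow> j < m \<Longrightarrow> 0 \<le> M $$ (i, j)"
  shows "i < m \<Longrightarrow> j < m \<Longrightarrow> 0 \<le> (M ^\<^sub>m n) $$ (i, j)"
proof (induction n arbitrary: j)
  case (Suc n)
  have "(M ^\<^sub>m Suc n) $$ (i, j) = (\<Sum>l<m. (M ^\<^sub>m n) $$ (i, l) * M $$ (l, j))"
    using M Suc.prems by (simp only: pow_mat.simps) (rule index_mult_mat_sum, auto)
  then show ?case using Suc M nonneg by (auto intro!: sum_nonneg)
qed (use M in simp)

lemma stochastic_mat_carrier:
  assumes "M \<in> carrier_mat m m"
  shows "stochastic_mat M \<longleftrightarrow>
    (\<forall>i<m. \<forall>j<m. 0 \<le> M $$ (i, j)) \<and> (\<forall>i<m. (\<Sum>j<m. M $$ (i, j)) = 1)"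
  using assms unfolding stochastic_mat_def by auto

lemma stochastic_mat_mult:
  assumes A: "A \<in> carrier_mat m m" "stochastic_mat A" and B: "B \<in> carrier_mat m m" "stochastic_mat B"
  shows "stochastic_mat (A * B)"
proof -
  have "(\<Sum>j<m. (A * B) $$ (i, j)) = 1" if i: "i < m" for i
  proof -
    have "(\<Sum>j<m. (A * B) $$ (i, j)) = (\<Sum>j<m. \<Sum>k<m. A $$ (i, k) * B $$ (k, j))"
      using A B i by (intro sum.cong refl index_mult_mat_sum) auto
    also have "\<dots> = (\<Sum>k<m. A $$ (i, k) * (\<Sum>j<m. B $$ (k, j)))"
      by (subst sum.swap) (simp add: sum_distrib_left)
    also have "\<dots> = 1" using A B i by (simp add: stochastic_mat_carrier)
    finally show ?thesis .
  qed
  moreover have "0 \<le> (A * B) $$ (i, j)" if "i < m" "j < m" for i j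
    using A B that
    by (subst index_mult_mat_sum[of _ m m _ m]) (auto simp: stochastic_mat_carrier intro!: sum_nonneg)
  ultimately show ?thesis using A B by (subst stochastic_mat_carrier[of _ m]) auto
qed

lemma stochastic_mat_one: "stochastic_mat (1\<^sub>m m :: real mat)"
proof -
  have "(\<Sum>j<m. (1\<^sub>m m :: real mat) $$ (i, j)) = (\<Sum>j<m. if j = i then 1 else 0)" if "i < m" for i
    using that by (intro sum.cong) auto
  then show ?thesis by (simp add: stochastic_mat_carrier[of _ m])
qed

lemma stochastic_mat_pow:
  assumes "M \<in> carrier_mat m m" "stochastic_mat M"
  shows "stochastic_mat (M ^\<^sub>m n)"
  by (induction n) (use assms in \<open>auto intro: stochastic_mat_mult[of _ m] stochastic_mat_one\<close>)

lemma stochastic_mat_entry_le_1: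
  assumes "M \<in> carrier_mat m m" "stochastic_mat M" "i < m" "j < m"
  shows "M $$ (i, j) \<le> 1"
proof -
  have "M $$ (i, j) \<le> (\<Sum>l<m. M $$ (i, l))"
    using assms by (intro member_le_sum) (auto simp: stochastic_mat_carrier)
  then show ?thesis using assms by (simp add: stochastic_mat_carrier)
qed

lemma stochastic_row_average_bounds:
  assumes "W \<in> carrier_mat m m" "stochastic_mat W" "i < m" "\<And>k. k < m \<Longrightarrow> v k \<in> {a..b}"
  shows "(\<Sum>k<m. W $$ (i, k) * v k) \<in> {a..b}"
proof -
  have W0: "\<And>k. k < m \<Longrightarrow> 0 \<le> W $$ (i, k)" and W1: "(\<Sum>k<m. W $$ (i, k)) = 1"
    using assms(1-3) by (auto simp: stochastic_mat_carrier)
  have "a = (\<Sum>k<m. W $$ (i, k) * a)" by (simp add: W1 flip: sum_distrib_right)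
  also have "\<dots> \<le> (\<Sum>k<m. W $$ (i, k) * v k)"
    using W0 assms(4) by (intro sum_mono mult_left_mono) auto
  finally have "a \<le> (\<Sum>k<m. W $$ (i, k) * v k)" .
  moreover have "(\<Sum>k<m. W $$ (i, k) * v k) \<le> (\<Sum>k<m. W $$ (i, k) * b)"
    using W0 assms(4) by (intro sum_mono mult_left_mono) auto
  ultimately show ?thesis using W1 by (simp flip: sum_distrib_right)
qed

text \<open>Doeblin's contraction: if every entry of row \<open>i\<close> is at least \<open>\<delta>\<close>, the average of \<open>v\<close>
  puts the fixed weight \<open>\<delta>\<close> on each \<open>v k\<close>, so the spread of \<open>v\<close> shrinks by the factor
  \<open>1 - m \<delta>\<close>.\<close>

lemma stochastic_row_average_contracts:
  assumes "Q \<in> carrier_mat m m" "stochastic_mat Q" "i < m" "\<And>k. k < m \<Longrightarrow> v k \<in> {a..b}"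
    and "\<And>k. k < m \<Longrightarrow> \<delta> \<le> Q $$ (i, k)"
  shows "(\<Sum>k<m. Q $$ (i, k) * v k) \<in>
    {\<delta> * (\<Sum>k<m. v k) + (1 - m * \<delta>) * a .. \<delta> * (\<Sum>k<m. v k) + (1 - m * \<delta>) * b}"
proof -
  have Q1: "(\<Sum>k<m. Q $$ (i, k)) = 1" using assms(1-3) by (auto simp: stochastic_mat_carrier)
  have eq: "(\<Sum>k<m. Q $$ (i, k) * v k) = \<delta> * (\<Sum>k<m. v k) + (\<Sum>k<m. (Q $$ (i, k) - \<delta>) * v k)"
    by (simp add: algebra_simps sum.distrib sum_distrib_left sum_subtractf)
  have weights: "(\<Sum>k<m. Q $$ (i, k) - \<delta>) = 1 - m * \<delta>" using Q1 by (simp add: sum_subtractf)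
  have "(1 - m * \<delta>) * a = (\<Sum>k<m. (Q $$ (i, k) - \<delta>) * a)" by (simp add: weights flip: sum_distrib_right)
  also have "\<dots> \<le> (\<Sum>k<m. (Q $$ (i, k) - \<delta>) * v k)"
    using assms(4,5) by (intro sum_mono mult_left_mono) auto
  finally have lower: "(1 - m * \<delta>) * a \<le> (\<Sum>k<m. (Q $$ (i, k) - \<delta>) * v k)" .
  have "(\<Sum>k<m. (Q $$ (i, k) - \<delta>) * v k) \<le> (\<Sum>k<m. (Q $$ (i, k) - \<delta>) * b)"
    using assms(4,5) by (intro sum_mono mult_left_mono) auto
  also have "\<dots> = (1 - m * \<delta>) * b" by (simp add: weights flip: sum_distrib_right)
  finally show ?thesis unfolding eq using lower by simp
qed

lemma stochastic_column_stays_in_range: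
  assumes M: "M \<in> carrier_mat m m" "stochastic_mat M" and "j < m" "n \<le> n'"
    and range: "\<And>i. i < m \<Longrightarrow> (M ^\<^sub>m n) $$ (i, j) \<in> {a..b}" and "i < m"
  shows "(M ^\<^sub>m n') $$ (i, j) \<in> {a..b}"
proof -
  have "M ^\<^sub>m n' = M ^\<^sub>m (n' - n) * M ^\<^sub>m n"
    using pow_mat_add[OF M(1), of "n' - n" n] \<open>n \<le> n'\<close> by simp
  then have "(M ^\<^sub>m n') $$ (i, j) = (\<Sum>k<m. (M ^\<^sub>m (n' - n)) $$ (i, k) * (M ^\<^sub>m n) $$ (k, j))"
    using M \<open>i < m\<close> \<open>j < m\<close> by (simp only:) (rule index_mult_mat_sum, auto)
  then show ?thesis
    using stochastic_row_average_bounds[OF _ stochastic_mat_pow[OF M] \<open>i < m\<close> range] M(1) by simp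
qed

lemma doeblin_column_oscillation:
  assumes M: "M \<in> carrier_mat m m" "stochastic_mat M" and "0 < m" "j < m"
    and \<delta>: "\<And>i j. i < m \<Longrightarrow> j < m \<Longrightarrow> \<delta> \<le> (M ^\<^sub>m k) $$ (i, j)"
  shows "\<exists>a b. b - a \<le> (1 - m * \<delta>) ^ K \<and> (\<forall>i<m. (M ^\<^sub>m (K * k)) $$ (i, j) \<in> {a..b})"
proof (induction K)
  case 0
  have "(1\<^sub>m m :: real mat) $$ (i, j) \<in> {0..1}" if "i < m" for i
    using that \<open>j < m\<close> by simp
  then show ?case using M(1) by (intro exI[of _ 0] exI[of _ 1]) auto
next
  case (Suc K)
  then obtain a b where ab: "b - a \<le> (1 - m * \<delta>) ^ K" "\<forall>i<m. (M ^\<^sub>m (K * k)) $$ (i, j) \<in> {a..b}"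
    by blast
  define \<Sigma> where "\<Sigma> = (\<Sum>l<m. (M ^\<^sub>m (K * k)) $$ (l, j))"
  have Mk: "M ^\<^sub>m k \<in> carrier_mat m m" "stochastic_mat (M ^\<^sub>m k)"
    using M by (auto intro: stochastic_mat_pow)
  have "real m * \<delta> = (\<Sum>l<m. \<delta>)" by simp
  also have "\<dots> \<le> (\<Sum>l<m. (M ^\<^sub>m k) $$ (0, l))" using \<delta> \<open>0 < m\<close> by (intro sum_mono) auto
  also have "\<dots> = 1" using Mk \<open>0 < m\<close> by (simp add: stochastic_mat_carrier)
  finally have c0: "0 \<le> 1 - m * \<delta>" by simp
  have "(M ^\<^sub>m (Suc K * k)) $$ (i, j) \<in> {\<delta> * \<Sigma> + (1 - m * \<delta>) * a .. \<delta> * \<Sigma> + (1 - m * \<delta>) * b}"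
    if i: "i < m" for i
  proof -
    have "M ^\<^sub>m (Suc K * k) = M ^\<^sub>m k * M ^\<^sub>m (K * k)"
      using pow_mat_add[OF M(1), of k "K * k"] by simp
    then have "(M ^\<^sub>m (Suc K * k)) $$ (i, j) = (\<Sum>l<m. (M ^\<^sub>m k) $$ (i, l) * (M ^\<^sub>m (K * k)) $$ (l, j))"
      using M i \<open>j < m\<close> by (simp only:) (rule index_mult_mat_sum, auto)
    then show ?thesis
      unfolding \<Sigma>_def
      using stochastic_row_average_contracts[OF Mk i, of "\<lambda>l. (M ^\<^sub>m (K * k)) $$ (l, j)" a b \<delta>]
        ab(2) \<delta>[OF i] by simp
  qed
  moreover have "(\<delta> * \<Sigma> + (1 - m * \<delta>) * b) - (\<delta> * \<Sigma> + (1 - m * \<delta>) * a) \<le> (1 - m * \<delta>) ^ Suc K"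
    using mult_left_mono[OF ab(1) c0] by (simp add: algebra_simps)
  ultimately show ?case by blast
qed

lemma primitive_stochastic_columns_Cauchy:
  assumes M: "M \<in> carrier_mat m m" "stochastic_mat M" and "j < m" "0 < e"
    and pos: "\<And>i j. i < m \<Longrightarrow> j < m \<Longrightarrow> 0 < (M ^\<^sub>m k) $$ (i, j)"
  shows "\<exists>N. \<forall>n\<ge>N. \<forall>n'\<ge>N. \<forall>i<m. \<forall>i'<m. \<bar>(M ^\<^sub>m n) $$ (i, j) - (M ^\<^sub>m n') $$ (i', j)\<bar> < e"
proof -
  have "0 < m" using \<open>j < m\<close> by simp
  define \<delta> where "\<delta> = Min ((\<lambda>(i, j). (M ^\<^sub>m k) $$ (i, j)) ` ({..<m} \<times> {..<m}))"
  have \<delta>_pos: "0 < \<delta>" unfolding \<delta>_def using \<open>0 < m\<close> pos by (subst Min_gr_iff) auto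
  have \<delta>_le: "\<delta> \<le> (M ^\<^sub>m k) $$ (i, j)" if "i < m" "j < m" for i j
    unfolding \<delta>_def using that by (intro Min_le) auto
  have "1 - m * \<delta> < 1" using \<open>0 < m\<close> \<delta>_pos by simp
  then obtain K where K: "(1 - m * \<delta>) ^ K < e" using real_arch_pow_inv[OF \<open>0 < e\<close>] by blast
  obtain a b where ab: "b - a \<le> (1 - m * \<delta>) ^ K" "\<forall>i<m. (M ^\<^sub>m (K * k)) $$ (i, j) \<in> {a..b}"
    using doeblin_column_oscillation[OF M \<open>0 < m\<close> \<open>j < m\<close> \<delta>_le] by blast
  have range: "(M ^\<^sub>m n) $$ (i, j) \<in> {a..b}" if "K * k \<le> n" "i < m" for n i
    using stochastic_column_stays_in_range[OF M \<open>j < m\<close> that(1) _ that(2)] ab(2) by blast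
  show ?thesis
  proof (intro exI[of _ "K * k"] allI impI)
    fix n n' i i' assume "K * k \<le> n" "K * k \<le> n'" "i < m" "i' < m"
    then have "(M ^\<^sub>m n) $$ (i, j) \<in> {a..b}" "(M ^\<^sub>m n') $$ (i', j) \<in> {a..b}" using range by auto
    then show "\<bar>(M ^\<^sub>m n) $$ (i, j) - (M ^\<^sub>m n') $$ (i', j)\<bar> < e" using ab(1) K by auto
  qed
qed

lemma primitive_stochastic_mat_columns_converge:
  assumes M: "M \<in> carrier_mat m m" "stochastic_mat M"
    and pos: "\<And>i j. i < m \<Longrightarrow> j < m \<Longrightarrow> 0 < (M ^\<^sub>m k) $$ (i, j)"
  obtains \<pi> where "\<And>i j. i < m \<Longrightarrow> j < m \<Longrightarrow> (\<lambda>n. (M ^\<^sub>m n) $$ (i, j)) \<longlonglongrightarrow> \<pi> j"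
proof
  fix i j assume ij: "i < m" "j < m"
  then have "0 < m" by simp
  have "Cauchy (\<lambda>n. (M ^\<^sub>m n) $$ (0, j))"
  proof (rule CauchyI)
    fix e :: real assume "0 < e"
    then show "\<exists>N. \<forall>n\<ge>N. \<forall>n'\<ge>N. norm ((M ^\<^sub>m n) $$ (0, j) - (M ^\<^sub>m n') $$ (0, j)) < e"
      using primitive_stochastic_columns_Cauchy[OF M ij(2) _ pos] \<open>0 < m\<close> by fastforce
  qed
  then have row_0: "(\<lambda>n. (M ^\<^sub>m n) $$ (0, j)) \<longlonglongrightarrow> lim (\<lambda>n. (M ^\<^sub>m n) $$ (0, j))"
    using Cauchy_convergent convergent_LIMSEQ_iff by blast
  have "(\<lambda>n. (M ^\<^sub>m n) $$ (i, j) - (M ^\<^sub>m n) $$ (0, j)) \<longlonglongrightarrow> 0"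
  proof (rule LIMSEQ_I)
    fix e :: real assume "0 < e"
    then show "\<exists>N. \<forall>n\<ge>N. norm ((M ^\<^sub>m n) $$ (i, j) - (M ^\<^sub>m n) $$ (0, j) - 0) < e"
      using primitive_stochastic_columns_Cauchy[OF M ij(2) _ pos] \<open>0 < m\<close> ij(1) by fastforce
  qed
  from tendsto_add[OF this row_0]
  show "(\<lambda>n. (M ^\<^sub>m n) $$ (i, j)) \<longlonglongrightarrow> lim (\<lambda>n. (M ^\<^sub>m n) $$ (0, j))" by simp
qed

lemma primitive_stochastic_mat_limit:
  assumes M: "M \<in> carrier_mat m m" "stochastic_mat M" and "0 < m"
    and pos: "\<And>i j. i < m \<Longrightarrow> j < m \<Longrightarrow> 0 < (M ^\<^sub>m k) $$ (i, j)"
  obtains \<pi> where "\<And>j. j < m \<Longrightarrow> 0 < \<pi> j" "(\<Sum>j<m. \<pi> j) = 1"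
    "\<And>i j. i < m \<Longrightarrow> j < m \<Longrightarrow> (\<lambda>n. (M ^\<^sub>m n) $$ (i, j)) \<longlonglongrightarrow> \<pi> j"
proof -
  obtain \<pi> where lim: "\<And>i j. i < m \<Longrightarrow> j < m \<Longrightarrow> (\<lambda>n. (M ^\<^sub>m n) $$ (i, j)) \<longlonglongrightarrow> \<pi> j"
    using primitive_stochastic_mat_columns_converge[OF M pos] by blast
  have "0 < \<pi> j" if j: "j < m" for j
  proof -
    define \<delta> where "\<delta> = Min ((\<lambda>l. (M ^\<^sub>m k) $$ (l, j)) ` {..<m})"
    have \<delta>_pos: "0 < \<delta>" unfolding \<delta>_def using \<open>0 < m\<close> pos j by (subst Min_gr_iff) auto
    have \<delta>_le: "\<delta> \<le> (M ^\<^sub>m k) $$ (l, j)" if "l < m" for l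
      unfolding \<delta>_def using that by (intro Min_le) auto
    have column_k: "(M ^\<^sub>m k) $$ (l, j) \<in> {\<delta>..1}" if "l < m" for l
      using \<delta>_le[OF that] stochastic_mat_entry_le_1[OF pow_carrier_mat[OF M(1)] stochastic_mat_pow[OF M] that j]
      by auto
    have "(M ^\<^sub>m n) $$ (0, j) \<in> {\<delta>..1}" if "k \<le> n" for n
      using stochastic_column_stays_in_range[OF M j that column_k \<open>0 < m\<close>] .
    then have "\<delta> \<le> \<pi> j" using LIMSEQ_le_const[OF lim[OF \<open>0 < m\<close> j]] by auto
    with \<delta>_pos show ?thesis by simp
  qed
  moreover have "(\<Sum>j<m. \<pi> j) = 1"
  proof (rule LIMSEQ_unique)
    show "(\<lambda>n. \<Sum>j<m. (M ^\<^sub>m n) $$ (0, j)) \<longlonglongrightarrow> (\<Sum>j<m. \<pi> j)"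
      using lim \<open>0 < m\<close> by (intro tendsto_sum) auto
    have "(\<Sum>j<m. (M ^\<^sub>m n) $$ (0, j)) = 1" for n
      using stochastic_mat_pow[OF M, of n] M(1) \<open>0 < m\<close> by (simp add: stochastic_mat_carrier[of _ m])
    then show "(\<lambda>n. \<Sum>j<m. (M ^\<^sub>m n) $$ (0, j)) \<longlonglongrightarrow> 1" by simp
  qed
  ultimately show ?thesis using that lim by blast
qed

lemma primitive_stochastic_mat_tendsto_rank_one:
  assumes "M \<in> carrier_mat m m" "stochastic_mat M" "0 < m"
    and "\<And>i j. i < m \<Longrightarrow> j < m \<Longrightarrow> 0 < (M ^\<^sub>m k) $$ (i, j)"
  shows "\<exists>L C. L \<in> carrier_mat m m \<and> mat_tendsto (\<lambda>n. M ^\<^sub>m n) L \<and> stochastic_mat L \<and>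
    C \<in> carrier_mat 1 m \<and> (\<forall>j<m. 0 < C $$ (0, j)) \<and> L = mat m 1 (\<lambda>_. 1) * C"
proof -
  obtain \<pi> where \<pi>: "\<And>j. j < m \<Longrightarrow> 0 < \<pi> j" "(\<Sum>j<m. \<pi> j) = 1"
    "\<And>i j. i < m \<Longrightarrow> j < m \<Longrightarrow> (\<lambda>n. (M ^\<^sub>m n) $$ (i, j)) \<longlonglongrightarrow> \<pi> j"
    using primitive_stochastic_mat_limit[OF assms] by blast
  let ?L = "mat m m (\<lambda>(i, j). \<pi> j)" and ?C = "mat 1 m (\<lambda>(i, j). \<pi> j)"
  have "mat_tendsto (\<lambda>n. M ^\<^sub>m n) ?L"
    unfolding mat_tendsto_def using \<pi>(3) assms(1) by auto
  moreover have "stochastic_mat ?L"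
    unfolding stochastic_mat_def using \<pi>(1,2) by (auto simp: less_imp_le)
  moreover have "?L = mat m 1 (\<lambda>_. 1) * ?C"
    by (rule eq_matI) (auto simp: scalar_prod_def)
  ultimately show ?thesis using \<pi>(1) by (intro exI[of _ ?L] exI[of _ ?C]) auto
qed

section \<open>Nearest-neighbour chains\<close>

lemma tridiagonal_pow_pos:
  fixes M :: "real mat"
  assumes M: "M \<in> carrier_mat m m" and nonneg: "\<And>i j. i < m \<Longrightarrow> j < m \<Longrightarrow> 0 \<le> M $$ (i, j)"
    and diag: "\<And>i. i < m \<Longrightarrow> 0 < M $$ (i, i)"
    and up: "\<And>i. Suc i < m \<Longrightarrow> 0 < M $$ (i, Suc i)"
    and down: "\<And>i. Suc i < m \<Longrightarrow> 0 < M $$ (Suc i, i)"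
  shows "i < m \<Longrightarrow> j < m \<Longrightarrow> i \<le> j + n \<Longrightarrow> j \<le> i + n \<Longrightarrow> 0 < (M ^\<^sub>m n) $$ (i, j)"
proof (induction n arbitrary: j)
  case (Suc n)
  have entry: "(M ^\<^sub>m Suc n) $$ (i, j) = (\<Sum>k<m. (M ^\<^sub>m n) $$ (i, k) * M $$ (k, j))"
    using Suc.prems M by (simp only: pow_mat.simps) (rule index_mult_mat_sum, auto)
  have terms_nonneg: "0 \<le> (M ^\<^sub>m n) $$ (i, k) * M $$ (k, j)" if "k < m" for k
    using pow_mat_nonneg[OF M nonneg] nonneg Suc.prems that by simp
  obtain k where "k < m" "0 < (M ^\<^sub>m n) $$ (i, k) * M $$ (k, j)"
  proof (cases "i \<le> j + n \<and> j \<le> i + n")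
    case True
    then show ?thesis using that[of j] Suc diag[of j] by auto
  next
    case False
    show ?thesis
    proof (cases "i + n < j")
      case True
      then have "j = Suc (j - 1)" "j - 1 = i + n" using Suc.prems by auto
      then show ?thesis using that[of "j - 1"] Suc.IH[of "j - 1"] Suc.prems up[of "j - 1"]
        by (auto intro!: mult_pos_pos)
    next
      case False
      then have "i = j + n + 1" using Suc.prems \<open>\<not> (i \<le> j + n \<and> j \<le> i + n)\<close> by auto
      then show ?thesis using that[of "Suc j"] Suc.IH[of "Suc j"] Suc.prems down[of j]
        by (auto intro!: mult_pos_pos)
    qed
  qed
  then show ?case unfolding entry using terms_nonneg by (intro sum_pos2[of _ k]) auto
qed (use M in simp)

lemma parity_class_size: "c \<le> 1 \<Longrightarrow> l < (s + 1 - c) div 2 \<longleftrightarrow> 2 * l + c < s"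
  for c l s :: nat
  by presburger

lemma sum_parity_class:
  fixes c s :: nat
  assumes "c \<le> 1" and vanish: "\<And>k. k < s \<Longrightarrow> odd (k + c) \<Longrightarrow> f k = 0"
  shows "(\<Sum>k<s. f k) = (\<Sum>l<(s + 1 - c) div 2. f (2 * l + c))"
proof -
  have "(\<Sum>k<s. f k) = (\<Sum>k\<in>(\<lambda>l. 2 * l + c) ` {..<(s + 1 - c) div 2}. f k)"
  proof (rule sum.mono_neutral_right)
    show "(\<lambda>l. 2 * l + c) ` {..<(s + 1 - c) div 2} \<subseteq> {..<s}"
      using parity_class_size[OF \<open>c \<le> 1\<close>] by auto
    show "\<forall>k\<in>{..<s} - (\<lambda>l. 2 * l + c) ` {..<(s + 1 - c) div 2}. f k = 0"
    proof
      fix k assume k: "k \<in> {..<s} - (\<lambda>l. 2 * l + c) ` {..<(s + 1 - c) div 2}"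
      have "odd (k + c)"
      proof
        assume "even (k + c)"
        then have "k = 2 * ((k - c) div 2) + c" using \<open>c \<le> 1\<close> by presburger
        moreover have "(k - c) div 2 < (s + 1 - c) div 2"
          using parity_class_size[OF \<open>c \<le> 1\<close>, of "(k - c) div 2"] k calculation by auto
        ultimately show False using k by blast
      qed
      then show "f k = 0" using vanish k by auto
    qed
  qed auto
  also have "\<dots> = (\<Sum>l<(s + 1 - c) div 2. f (2 * l + c))"
    by (subst sum.reindex) (auto simp: inj_on_def)
  finally show ?thesis .
qed

locale nearest_neighbour_chain =
  fixes A :: "real mat" and s :: nat
  assumes carrier: "A \<in> carrier_mat s s" and two_le_s: "2 \<le> s" and stochastic: "stochastic_mat A"
    and neighbours_only: "\<And>i j. i < s \<Longrightarrow> j < s \<Longrightarrow> A $$ (i, j) \<noteq> 0 \<Longrightarrow> j = Suc i \<or> i = Suc j"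
    and up_pos: "\<And>i. Suc i < s \<Longrightarrow> 0 < A $$ (i, Suc i)"
    and down_pos: "\<And>i. Suc i < s \<Longrightarrow> 0 < A $$ (Suc i, i)"
begin

lemma pow_entry_odd_zero: "i < s \<Longrightarrow> j < s \<Longrightarrow> odd (i + j + n) \<Longrightarrow> (A ^\<^sub>m n) $$ (i, j) = 0"
proof (induction n arbitrary: j)
  case (Suc n)
  have "(A ^\<^sub>m Suc n) $$ (i, j) = (\<Sum>k<s. (A ^\<^sub>m n) $$ (i, k) * A $$ (k, j))"
    using Suc.prems carrier by (simp only: pow_mat.simps) (rule index_mult_mat_sum, auto)
  also have "\<dots> = 0"
  proof (intro sum.neutral ballI)
    fix k assume k: "k \<in> {..<s}"
    show "(A ^\<^sub>m n) $$ (i, k) * A $$ (k, j) = 0"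
    proof (cases "A $$ (k, j) = 0")
      case False
      then have "j = Suc k \<or> k = Suc j" using neighbours_only[of k j] k Suc.prems by auto
      then have "odd (i + k + n)" using Suc.prems(3) by presburger
      then show ?thesis using Suc.IH[of k] Suc.prems(1) k by simp
    qed simp
  qed
  finally show ?case .
qed (use carrier in auto)

lemma sq_entry_pos:
  assumes "a < s" "b < s" "k < s" "0 < A $$ (a, k)" "0 < A $$ (k, b)"
  shows "0 < (A ^\<^sub>m 2) $$ (a, b)"
proof -
  have "(A ^\<^sub>m 2) $$ (a, b) = (A * A) $$ (a, b)" using carrier by (simp add: numeral_2_eq_2)
  also have "\<dots> = (\<Sum>l<s. A $$ (a, l) * A $$ (l, b))"
    by (rule index_mult_mat_sum[OF carrier carrier assms(1,2)])
  also have "\<dots> > 0"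
    using assms carrier stochastic
    by (intro sum_pos2[of _ k]) (auto simp: stochastic_mat_carrier[of _ s] intro!: mult_nonneg_nonneg)
  finally show ?thesis .
qed

text \<open>Two steps preserve the parity of the state, so \<open>A\<^sup>2\<close> splits into blocks on the states
  \<open>c, c + 2, c + 4, \<dots>\<close> for \<open>c \<in> {0, 1}\<close> (0-based indices).\<close>

definition parity_block :: "nat \<Rightarrow> real mat" where
  "parity_block c = mat ((s + 1 - c) div 2) ((s + 1 - c) div 2) (\<lambda>(i, j). (A ^\<^sub>m 2) $$ (2 * i + c, 2 * j + c))"

context
  fixes c :: nat
  assumes c: "c \<le> 1"
begin

lemma class_index: "l < (s + 1 - c) div 2 \<longleftrightarrow> 2 * l + c < s"
  using parity_class_size[OF c] .

lemma sq_entry_off_class_zero: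
  assumes "i < (s + 1 - c) div 2" "k < s" "odd (k + c)"
  shows "(A ^\<^sub>m 2) $$ (2 * i + c, k) = 0" and "(A ^\<^sub>m 2) $$ (k, 2 * i + c) = 0"
proof -
  have "odd (2 * i + c + k + 2)" "odd (k + (2 * i + c) + 2)" using assms(3) by presburger+
  then show "(A ^\<^sub>m 2) $$ (2 * i + c, k) = 0" "(A ^\<^sub>m 2) $$ (k, 2 * i + c) = 0"
    using pow_entry_odd_zero assms(1,2) class_index by auto
qed

lemma parity_block_carrier: "parity_block c \<in> carrier_mat ((s + 1 - c) div 2) ((s + 1 - c) div 2)"
  by (simp add: parity_block_def)

lemma parity_block_stochastic: "stochastic_mat (parity_block c)"
proof -
  have sq: "A ^\<^sub>m 2 \<in> carrier_mat s s" "stochastic_mat (A ^\<^sub>m 2)"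
    using carrier stochastic by (auto intro: stochastic_mat_pow)
  have "(\<Sum>j<(s + 1 - c) div 2. parity_block c $$ (i, j)) = 1" if i: "i < (s + 1 - c) div 2" for i
  proof -
    have "(\<Sum>j<(s + 1 - c) div 2. parity_block c $$ (i, j)) =
        (\<Sum>l<(s + 1 - c) div 2. (A ^\<^sub>m 2) $$ (2 * i + c, 2 * l + c))"
      unfolding parity_block_def using i by (intro sum.cong) auto
    also have "\<dots> = (\<Sum>k<s. (A ^\<^sub>m 2) $$ (2 * i + c, k))"
      using i sq_entry_off_class_zero(1) by (intro sum_parity_class[OF c, symmetric]) auto
    also have "\<dots> = 1" using sq class_index i by (simp add: stochastic_mat_carrier)
    finally show ?thesis .
  qed
  moreover have "0 \<le> parity_block c $$ (i, j)"
    if "i < (s + 1 - c) div 2" "j < (s + 1 - c) div 2" for i j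
    using that sq class_index by (simp add: parity_block_def stochastic_mat_carrier)
  ultimately show ?thesis using parity_block_carrier by (simp add: stochastic_mat_carrier)
qed

lemma parity_block_diag_pos: "i < (s + 1 - c) div 2 \<Longrightarrow> 0 < parity_block c $$ (i, i)"
  and parity_block_up_pos: "Suc i < (s + 1 - c) div 2 \<Longrightarrow> 0 < parity_block c $$ (i, Suc i)"
  and parity_block_down_pos: "Suc i < (s + 1 - c) div 2 \<Longrightarrow> 0 < parity_block c $$ (Suc i, i)"
proof -
  assume i: "i < (s + 1 - c) div 2"
  define r where "r = 2 * i + c"
  have r: "r < s" using class_index i r_def by auto
  have "0 < (A ^\<^sub>m 2) $$ (r, r)"
  proof (cases "Suc r < s")
    case True
    then show ?thesis using sq_entry_pos[OF r r True] up_pos down_pos by blast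
  next
    case False
    then obtain q where q: "r = Suc q" using r two_le_s by (cases r) auto
    then show ?thesis using sq_entry_pos[of r r q] up_pos[of q] down_pos[of q] r by auto
  qed
  then show "0 < parity_block c $$ (i, i)" unfolding parity_block_def r_def using i by simp
next
  assume i: "Suc i < (s + 1 - c) div 2"
  then have r: "Suc (Suc (2 * i + c)) < s" using class_index[of "Suc i"] by simp
  show "0 < parity_block c $$ (i, Suc i)"
    using sq_entry_pos[of "2 * i + c" "Suc (Suc (2 * i + c))" "Suc (2 * i + c)"] up_pos r i
    by (simp add: parity_block_def)
next
  assume i: "Suc i < (s + 1 - c) div 2"
  then have r: "Suc (Suc (2 * i + c)) < s" using class_index[of "Suc i"] by simp
  show "0 < parity_block c $$ (Suc i, i)"
    using sq_entry_pos[of "Suc (Suc (2 * i + c))" "2 * i + c" "Suc (2 * i + c)"] down_pos r i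
    by (simp add: parity_block_def)
qed

lemma even_power_parity_class:
  assumes "i < (s + 1 - c) div 2" "j < (s + 1 - c) div 2"
  shows "(A ^\<^sub>m (2 * n)) $$ (2 * i + c, 2 * j + c) = (parity_block c ^\<^sub>m n) $$ (i, j)"
  using assms(2)
proof (induction n arbitrary: j)
  case 0
  then show ?case using carrier class_index assms(1) by (simp add: parity_block_def)
next
  case (Suc n)
  have ij: "2 * i + c < s" "2 * j + c < s" using Suc.prems assms(1) class_index by auto
  have "A ^\<^sub>m (2 * Suc n) = A ^\<^sub>m (2 * n) * A ^\<^sub>m 2"
    using pow_mat_add[OF carrier, of "2 * n" 2] by simp
  then have "(A ^\<^sub>m (2 * Suc n)) $$ (2 * i + c, 2 * j + c)
     = (\<Sum>k<s. (A ^\<^sub>m (2 * n)) $$ (2 * i + c, k) * (A ^\<^sub>m 2) $$ (k, 2 * j + c))"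
    using ij carrier by (simp only:) (rule index_mult_mat_sum, auto)
  also have "\<dots> = (\<Sum>l<(s + 1 - c) div 2.
      (A ^\<^sub>m (2 * n)) $$ (2 * i + c, 2 * l + c) * (A ^\<^sub>m 2) $$ (2 * l + c, 2 * j + c))"
    using Suc.prems sq_entry_off_class_zero(2) by (intro sum_parity_class[OF c]) auto
  also have "\<dots> = (\<Sum>l<(s + 1 - c) div 2. (parity_block c ^\<^sub>m n) $$ (i, l) * parity_block c $$ (l, j))"
    using Suc.IH Suc.prems by (intro sum.cong) (auto simp: parity_block_def)
  also have "\<dots> = (parity_block c ^\<^sub>m Suc n) $$ (i, j)"
    using parity_block_carrier Suc.prems assms(1)
    by (simp only: pow_mat.simps) (rule index_mult_mat_sum[symmetric], auto)
  finally show ?case .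
qed

lemma even_power_parity_block:
  "mat ((s + 1 - c) div 2) ((s + 1 - c) div 2) (\<lambda>(i, j). (A ^\<^sub>m (2 * n)) $$ (2 * i + c, 2 * j + c)) =
   parity_block c ^\<^sub>m n"
proof (rule eq_matI)
  have B: "parity_block c ^\<^sub>m n \<in> carrier_mat ((s + 1 - c) div 2) ((s + 1 - c) div 2)"
    using parity_block_carrier by simp
  then show "dim_row (mat ((s + 1 - c) div 2) ((s + 1 - c) div 2)
      (\<lambda>(i, j). (A ^\<^sub>m (2 * n)) $$ (2 * i + c, 2 * j + c))) = dim_row (parity_block c ^\<^sub>m n)"
    and "dim_col (mat ((s + 1 - c) div 2) ((s + 1 - c) div 2)
      (\<lambda>(i, j). (A ^\<^sub>m (2 * n)) $$ (2 * i + c, 2 * j + c))) = dim_col (parity_block c ^\<^sub>m n)"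
    by auto
  fix i j assume "i < dim_row (parity_block c ^\<^sub>m n)" "j < dim_col (parity_block c ^\<^sub>m n)"
  with B have "i < (s + 1 - c) div 2" "j < (s + 1 - c) div 2" by auto
  then show "mat ((s + 1 - c) div 2) ((s + 1 - c) div 2)
      (\<lambda>(i, j). (A ^\<^sub>m (2 * n)) $$ (2 * i + c, 2 * j + c)) $$ (i, j) = (parity_block c ^\<^sub>m n) $$ (i, j)"
    using even_power_parity_class[of i j n] by simp
qed

lemma parity_block_tendsto_rank_one:
  "\<exists>L C. L \<in> carrier_mat ((s + 1 - c) div 2) ((s + 1 - c) div 2) \<and>
     mat_tendsto (\<lambda>n. parity_block c ^\<^sub>m n) L \<and> stochastic_mat L \<and>
     C \<in> carrier_mat 1 ((s + 1 - c) div 2) \<and> (\<forall>j<(s + 1 - c) div 2. 0 < C $$ (0, j)) \<and>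
     L = mat ((s + 1 - c) div 2) 1 (\<lambda>_. 1) * C"
proof (rule primitive_stochastic_mat_tendsto_rank_one[OF parity_block_carrier parity_block_stochastic])
  show "0 < (s + 1 - c) div 2" using two_le_s c by simp
  show "0 < (parity_block c ^\<^sub>m ((s + 1 - c) div 2)) $$ (i, j)"
    if "i < (s + 1 - c) div 2" "j < (s + 1 - c) div 2" for i j
    using that parity_block_stochastic parity_block_carrier
    by (intro tridiagonal_pow_pos[OF parity_block_carrier] parity_block_diag_pos
        parity_block_up_pos parity_block_down_pos) (auto simp: stochastic_mat_carrier)
qed

end

lemma P_odd_even_power: "P_odd (A ^\<^sub>m (2 * n)) = parity_block 0 ^\<^sub>m n"
  using even_power_parity_block[of 0 n] carrier by (simp add: P_odd_def)

lemma P_even_even_power: "P_even (A ^\<^sub>m (2 * n)) = parity_block 1 ^\<^sub>m n"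
  using even_power_parity_block[of 1 n] carrier by (simp add: P_even_def)

theorem even_power_parity_limits:
  "\<exists>A1 A2 C1 C2.
     A1 \<in> carrier_mat ((s+1) div 2) ((s+1) div 2) \<and> A2 \<in> carrier_mat (s div 2) (s div 2) \<and>
     mat_tendsto (\<lambda>n. P_odd (A ^\<^sub>m (2*n))) A1 \<and>
     mat_tendsto (\<lambda>n. P_even (A ^\<^sub>m (2*n))) A2 \<and>
     stochastic_mat A1 \<and> stochastic_mat A2 \<and>
     C1 \<in> carrier_mat 1 ((s+1) div 2) \<and> C2 \<in> carrier_mat 1 (s div 2) \<and>
     (\<forall>j<(s+1) div 2. 0 < C1 $$ (0,j)) \<and> (\<forall>j<s div 2. 0 < C2 $$ (0,j)) \<and>
     A1 = mat ((s+1) div 2) 1 (\<lambda>_. 1) * C1 \<and>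
     A2 = mat (s div 2) 1 (\<lambda>_. 1) * C2"
  using parity_block_tendsto_rank_one[of 0] parity_block_tendsto_rank_one[of 1]
  unfolding P_odd_even_power P_even_even_power by auto

end

section \<open>The embedded chain on \<open>D\<close>\<close>

locale embedded_chain = recurrent_diffusion +
  fixes s :: nat and d :: "nat \<Rightarrow> real"
  assumes two_le_s: "2 \<le> s"
    and d_mono: "\<And>i j. 1 \<le> i \<Longrightarrow> i < j \<Longrightarrow> j \<le> s \<Longrightarrow> d i < d j"
    and d_in: "\<And>i. 1 \<le> i \<Longrightarrow> i \<le> s \<Longrightarrow> d i \<in> S"
begin

definition states :: "real set" where
  "states = d ` {1..s}"

definition transition_mat :: "real mat" where
  "transition_mat = mat s s (\<lambda>(i, j). trans_prob P states (d (i + 1)) (d (j + 1)))"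

lemma d_less_iff: "i \<in> {1..s} \<Longrightarrow> j \<in> {1..s} \<Longrightarrow> d i < d j \<longleftrightarrow> i < j"
  using d_mono by (metis atLeastAtMost_iff linorder_neqE_nat order_less_asym)

lemma inj_d: "inj_on d {1..s}"
  by (rule inj_onI) (metis d_less_iff less_irrefl linorder_neqE_nat)

lemma states_between:
  assumes "i \<in> {1..s}" "j \<in> {1..s}"
  shows "states \<inter> {min (d i) (d j)<..<max (d i) (d j)} = d ` {min i j<..<max i j}"
proof -
  have iff: "d k \<in> {min (d i) (d j)<..<max (d i) (d j)} \<longleftrightarrow> k \<in> {min i j<..<max i j}"
    if "k \<in> {1..s}" for k
    using d_less_iff[OF that assms(1)] d_less_iff[OF assms(1) that]
      d_less_iff[OF that assms(2)] d_less_iff[OF assms(2) that]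
    by (auto simp: min_def max_def)
  show ?thesis
  proof
    show "states \<inter> {min (d i) (d j)<..<max (d i) (d j)} \<subseteq> d ` {min i j<..<max i j}"
      using iff unfolding states_def by auto
    show "d ` {min i j<..<max i j} \<subseteq> states \<inter> {min (d i) (d j)<..<max (d i) (d j)}"
    proof
      fix y assume "y \<in> d ` {min i j<..<max i j}"
      then obtain k where k: "k \<in> {min i j<..<max i j}" "y = d k" by auto
      then have "k \<in> {1..s}" using assms by auto
      then show "y \<in> states \<inter> {min (d i) (d j)<..<max (d i) (d j)}"
        using iff k unfolding states_def by auto
    qed
  qed
qed

lemma transition_entry:
  assumes "i < s" "j < s"
  shows "transition_mat $$ (i, j) =
    measure (P (d (Suc i))) (first_entry_event S (states - {d (Suc i)}) (d (Suc j)))"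
proof -
  have "trans_prob P states (d (Suc i)) (d (Suc j)) =
      measure (P (d (Suc i))) (first_entry_event S (states - {d (Suc i)}) (d (Suc j)))"
  proof (rule trans_prob_eq_first_entry)
    show "finite states" by (simp add: states_def)
    show "d (Suc i) \<in> states" using assms by (simp add: states_def)
    show "states \<subseteq> S" using d_in by (auto simp: states_def)
  qed
  then show ?thesis using assms by (simp add: transition_mat_def states_def)
qed

lemma transition_row_sum:
  assumes "i < s"
  shows "(\<Sum>j<s. transition_mat $$ (i, j)) = 1"
proof -
  have "(\<Sum>j<s. transition_mat $$ (i, j)) =
      (\<Sum>j<s. measure (P (d (Suc i))) (first_entry_event S (states - {d (Suc i)}) (d (Suc j))))"
    using assms transition_entry by simp
  also have "\<dots> = (\<Sum>k\<in>{1..s}. measure (P (d (Suc i))) (first_entry_event S (states - {d (Suc i)}) (d k)))"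
    by (simp only: One_nat_def sum.atLeast1_atMost_eq)
  also have "\<dots> = (\<Sum>y\<in>states. measure (P (d (Suc i))) (first_entry_event S (states - {d (Suc i)}) y))"
    unfolding states_def by (simp only: sum.reindex[OF inj_d] comp_def)
  also have "\<dots> = 1"
  proof -
    obtain k where "k \<in> {1..s}" "k \<noteq> Suc i"
    proof (cases "i = 0")
      case True
      then show ?thesis using that[of 2] two_le_s by auto
    next
      case False
      then show ?thesis using that[of 1] assms by auto
    qed
    then show ?thesis
      using assms d_in inj_d
      by (intro first_entry_prob_sum[of states "d (Suc i)" "d k"]) (auto simp: states_def inj_on_eq_iff)
  qed
  finally show ?thesis .
qed

lemma transition_neighbours_only:
  assumes ij: "i < s" "j < s" and nonzero: "transition_mat $$ (i, j) \<noteq> 0"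
  shows "j = Suc i \<or> i = Suc j"
proof (rule ccontr)
  assume far: "\<not> (j = Suc i \<or> i = Suc j)"
  have "transition_mat $$ (i, j) = 0"
  proof (cases "i = j")
    case True
    then show ?thesis using ij by (simp add: transition_entry first_entry_event_def first_entry_def)
  next
    case False
    with far obtain k where k: "k \<in> {min (Suc i) (Suc j)<..<max (Suc i) (Suc j)}" by force
    then have "d k \<in> states - {d (Suc i)}" "d k \<in> {min (d (Suc i)) (d (Suc j))<..<max (d (Suc i)) (d (Suc j))}"
      using states_between[of "Suc i" "Suc j"] ij inj_d unfolding states_def
      by (auto simp: inj_on_eq_iff)
    then show ?thesis
      using ij d_in by (simp add: transition_entry first_entry_blocked)
  qed
  with nonzero show False by simp
qed

lemma transition_adjacent_pos:
  assumes "i < s" "j < s" and "j = Suc i \<or> i = Suc j"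
  shows "0 < transition_mat $$ (i, j)"
proof -
  have ij: "i < s" "j < s" "Suc i \<in> {1..s}" "Suc j \<in> {1..s}" using assms by auto
  have "states \<inter> {min (d (Suc i)) (d (Suc j))<..<max (d (Suc i)) (d (Suc j))} = {}"
    using states_between[OF ij(3,4)] assms(3) by auto
  moreover have "d (Suc j) \<noteq> d (Suc i)" using inj_d ij assms(3) by (auto simp: inj_on_eq_iff)
  ultimately show ?thesis
    unfolding transition_entry[OF ij(1,2)] using ij d_in
    by (intro first_entry_adjacent_pos) (auto simp: states_def)
qed

lemma transition_nearest_neighbour: "nearest_neighbour_chain transition_mat s"
proof
  show "transition_mat \<in> carrier_mat s s" by (simp add: transition_mat_def)
  then show "stochastic_mat transition_mat"
    using transition_row_sum by (simp add: stochastic_mat_carrier transition_entry)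
qed (use two_le_s transition_neighbours_only transition_adjacent_pos in auto)

end

theorem corollaryB6:
  fixes S :: "real set" and P :: "real \<Rightarrow> (real \<Rightarrow> real) measure"
    and s :: nat and d :: "nat \<Rightarrow> real"
  assumes S: "S = UNIV \<or> S = {0..} \<or> S = {0<..}"
    and diff: "diffusion S P"
    and rec: "recurrent S P"
    and s2: "2 \<le> s"
    and d_mono: "\<And>i j. 1 \<le> i \<Longrightarrow> i < j \<Longrightarrow> j \<le> s \<Longrightarrow> d i < d j"
    and d_in: "\<And>i. 1 \<le> i \<Longrightarrow> i \<le> s \<Longrightarrow> d i \<in> S"
  defines "D \<equiv> d ` {1..s}"
    and "A \<equiv> mat s s (\<lambda>(i,j). trans_prob P (d ` {1..s}) (d (i+1)) (d (j+1)))"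
  shows "\<exists>A1 A2 C1 C2.
           A1 \<in> carrier_mat ((s+1) div 2) ((s+1) div 2) \<and> A2 \<in> carrier_mat (s div 2) (s div 2) \<and>
           mat_tendsto (\<lambda>n. P_odd (A ^\<^sub>m (2*n))) A1 \<and>
           mat_tendsto (\<lambda>n. P_even (A ^\<^sub>m (2*n))) A2 \<and>
           stochastic_mat A1 \<and> stochastic_mat A2 \<and>
           C1 \<in> carrier_mat 1 ((s+1) div 2) \<and> C2 \<in> carrier_mat 1 (s div 2) \<and>
           (\<forall>j<(s+1) div 2. 0 < C1 $$ (0,j)) \<and> (\<forall>j<s div 2. 0 < C2 $$ (0,j)) \<and>
           A1 = mat ((s+1) div 2) 1 (\<lambda>_. 1) * C1 \<and>
           A2 = mat (s div 2) 1 (\<lambda>_. 1) * C2"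
proof -
  interpret embedded_chain S P s d
    by unfold_locales (use diff rec s2 d_mono d_in in auto)
  have "A = transition_mat" unfolding A_def transition_mat_def states_def ..
  interpret chain: nearest_neighbour_chain transition_mat s
    by (rule transition_nearest_neighbour)
  show ?thesis unfolding \<open>A = transition_mat\<close> by (rule chain.even_power_parity_limits)
qed

end
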